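(* Let $p$ be an odd prime, let $q\in\mathbb{C}_p$ with $|1-q|_p<1$, let $h\in\mathbb{Z}$, $r\in\mathbb{N}$, $n\ge 0$, and let $w_1,w_2\in\mathbb{N}$ with $w_1\equiv 1\pmod 2$ and $w_2\equiv 1\pmod 2$. Then, for $x\in\mathbb{Z}_p$, \[ \sum_{i=0}^{n}\binom{n}{i}[w_2]_q^{i}[w_1]_q^{n-i}E_{n-i,q^{w_1}}^{(h,r)}(w_2x)\,T_{n,i,q^{w_2}}^{(h,r)}(w_1) =\sum_{i=0}^{n}\binom{n}{i}[w_1]_q^{i}[w_2]_q^{n-i}E_{n-i,q^{w_2}}^{(h,r)}(w_1x)\,T_{n,i,q^{w_1}}^{(h,r)}(w_2), \] where for $w\in\mathbb{N}$, \[ T_{n,i,q}^{(h,r)}(w)=\sum_{j_1,\dots,j_r=0}^{w-1}(-1)^{\sum_{l=1}^r j_l}\,q^{\sum_{l=1}^r(n+h-l-i)j_l}\,[j_1+\cdots+j_r]_q^i . \]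
   Context: $\mathbb{Z}_p$ denotes the $p$-adic integers and $\mathbb{C}_p$ the completion of the algebraic closure of $\mathbb{Q}_p$. For $q\in\mathbb{C}_p$ with $|1-q|_p<1$, the $q$-number is $[x]_q=\frac{1-q^x}{1-q}$, and $[x]_{q^w}=\frac{1-q^{wx}}{1-q^w}$. For a continuous function $f$ on $\mathbb{Z}_p$, the $p$-adic fermionic integral is $\int_{\mathbb{Z}_p}f(y)\,d\mu_{-1}(y)=\lim_{N\to\infty}\sum_{y=0}^{p^N-1}f(y)(-1)^y$; the multivariate integral over $y_1,\dots,y_r$ is the iterated one. For $h\in\mathbb{Z}$, $r\in\mathbb{N}$, the expansions of $q$-Euler polynomials are defined by \[ E_{n,q}^{(h,r)}(x)=\int_{\mathbb{Z}_p}\!\cdots\!\int_{\mathbb{Z}_p} q^{\sum_{l=1}^r(h-l)y_l}\,[x+y_1+\cdots+y_r]_q^n\,d\mu_{-1}(y_1)\cdots d\mu_{-1}(y_r), \] equivalently by the generating function $\sum_{n\ge0}E_{n,q}^{(h,r)}(x)\frac{t^n}{n!}=2^r\sum_{m_1,\dots,m_r=0}^{\infty}q^{\sum_{l=1}^r(h-l)m_l}(-1)^{\sum_{l=1}^r m_l}e^{[x+m_1+\cdots+m_r]_q t}$; $E_{n,q^w}^{(h,r)}$ denotes the same with $q$ replaced by $q^w$. *)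

theory Defs
  imports "HOL-Computational_Algebra.Polynomial" "HOL-Library.FuncSet"
begin

text \<open>An abstract model of C_p: a field of characteristic 0 with a non-archimedean
absolute value absv, complete, algebraically closed, in which the algebraic numbers
are dense, and with absv p = 1/p. These conditions characterise C_p up to
isometric isomorphism.\<close>

definition conv_abs :: "('a::field \<Rightarrow> real) \<Rightarrow> (nat \<Rightarrow> 'a) \<Rightarrow> 'a \<Rightarrow> bool" where
  "conv_abs absv X L \<longleftrightarrow> (\<forall>e>0. \<exists>M. \<forall>n\<ge>M. absv (X n - L) < e)"

definition cauchy_abs :: "('a::field \<Rightarrow> real) \<Rightarrow> (nat \<Rightarrow> 'a) \<Rightarrow> bool" where
  "cauchy_abs absv X \<longleftrightarrow> (\<forall>e>0. \<exists>M. \<forall>m\<ge>M. \<forall>n\<ge>M. absv (X m - X n) < e)"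

definition is_Cp :: "nat \<Rightarrow> ('a::field_char_0 \<Rightarrow> real) \<Rightarrow> bool" where
  "is_Cp p absv \<longleftrightarrow>
     (\<forall>x. absv x \<ge> 0) \<and>
     (\<forall>x. absv x = 0 \<longleftrightarrow> x = 0) \<and>
     (\<forall>x y. absv (x * y) = absv x * absv y) \<and>
     (\<forall>x y. absv (x + y) \<le> max (absv x) (absv y)) \<and>
     absv (of_nat p) = 1 / real p \<and>
     (\<forall>X. cauchy_abs absv X \<longrightarrow> (\<exists>L. conv_abs absv X L)) \<and>
     (\<forall>P :: 'a poly. degree P \<ge> 1 \<longrightarrow> (\<exists>z. poly P z = 0)) \<and>
     (\<forall>x e. e > 0 \<longrightarrow> (\<exists>y. (\<exists>P :: int poly. P \<noteq> 0 \<and> poly (map_poly of_int P) y = 0)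
                                \<and> absv (x - y) < e))"

definition Zp :: "('a::field \<Rightarrow> real) \<Rightarrow> 'a set" where
  "Zp absv = {x. \<exists>s :: nat \<Rightarrow> int. conv_abs absv (\<lambda>k. of_int (s k)) x}"

definition qpow :: "('a::field \<Rightarrow> real) \<Rightarrow> 'a \<Rightarrow> 'a \<Rightarrow> 'a" where
  "qpow absv q x = (THE y. \<forall>s :: nat \<Rightarrow> int.
       conv_abs absv (\<lambda>k. of_int (s k)) x \<longrightarrow> conv_abs absv (\<lambda>k. q powi (s k)) y)"

definition qnum :: "('a::field \<Rightarrow> real) \<Rightarrow> 'a \<Rightarrow> 'a \<Rightarrow> 'a" where
  "qnum absv q x = (if q = 1 then x else (1 - qpow absv q x) / (1 - q))"

definition fint :: "nat \<Rightarrow> ('a::field \<Rightarrow> real) \<Rightarrow> ('a \<Rightarrow> 'a) \<Rightarrow> 'a" where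
  "fint p absv f = (THE L. conv_abs absv (\<lambda>N. \<Sum>y<p ^ N. f (of_nat y) * (-1) ^ y) L)"

text \<open>Iterated fermionic integral over y_1,...,y_k (y_1 innermost); ys l is y_l.\<close>
fun fmint :: "nat \<Rightarrow> ('a::field \<Rightarrow> real) \<Rightarrow> nat \<Rightarrow> ((nat \<Rightarrow> 'a) \<Rightarrow> 'a) \<Rightarrow> (nat \<Rightarrow> 'a) \<Rightarrow> 'a" where
  "fmint p absv 0 F ys = F ys"
| "fmint p absv (Suc k) F ys = fint p absv (\<lambda>y. fmint p absv k F (ys(Suc k := y)))"

definition Eqhr :: "nat \<Rightarrow> ('a::field \<Rightarrow> real) \<Rightarrow> nat \<Rightarrow> 'a \<Rightarrow> int \<Rightarrow> nat \<Rightarrow> 'a \<Rightarrow> 'a" where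
  "Eqhr p absv n q h r x =
     fmint p absv r
       (\<lambda>ys. qpow absv q (\<Sum>l=1..r. of_int (h - int l) * ys l)
             * qnum absv q (x + (\<Sum>l=1..r. ys l)) ^ n) (\<lambda>_. 0)"

definition Tqhr :: "('a::field \<Rightarrow> real) \<Rightarrow> nat \<Rightarrow> nat \<Rightarrow> 'a \<Rightarrow> int \<Rightarrow> nat \<Rightarrow> nat \<Rightarrow> 'a" where
  "Tqhr absv n i q h r w =
     (\<Sum>j\<in>{1..r} \<rightarrow>\<^sub>E {0..<w}.
        (-1) ^ (\<Sum>l=1..r. j l)
        * q powi (\<Sum>l=1..r. (int n + h - int l - int i) * int (j l))
        * qnum absv q (of_nat (\<Sum>l=1..r. j l)) ^ i)"

end

theory Submission
  imports Defs
begin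

text \<open>For odd w the fermionic integral satisfies the distribution relation
  \<integral> f(y) d\<mu> = \<Sum>_{t<w} (-1)^t \<integral> f(t + w y) d\<mu>,
  because the alternating sum over [0, w p^N) differs from the one over [0, p^N) only by differences
  of values at points congruent modulo p^N. By [a + b]_q = [a]_q + q^a [b]_q and
  [w y]_q = [w]_q [y]_{q^w}, the binomial expansion of
  [w1 (w2 x + y_1 + ... + y_r) + w2 |j|]_q^n, integrated and summed over j \<in> [0, w1)^r with signs and
  q-weights, is the left-hand side. Applying the distribution relation with modulus w2 in every variable y_l turns the
  same sum into a double sum over j \<in> [0, w1)^r and k \<in> [0, w2)^r of integrals of
  [w1 w2 (x + y_1 + ... + y_r) + w2 |j| + w1 |k|]_q^n, which is symmetric in w1 and w2.

  Since C_p is given only axiomatically, the integral is handled through its defining limit: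
  integrands that are uniformly continuous for the p-adic topology of the natural numbers have
  convergent fermionic sums, and q^y is such an integrand because q^(p^N) tends to 1.\<close>

section \<open>Limits for a non-archimedean absolute value\<close>

locale Cp_field =
  fixes p :: nat and absv :: "'a::field_char_0 \<Rightarrow> real"
  assumes is_Cp: "is_Cp p absv" and prime_p: "prime p"
begin

abbreviation conv where "conv \<equiv> conv_abs absv"

lemma absv_nonneg: "absv x \<ge> 0" using is_Cp unfolding is_Cp_def by blast
lemma absv_eq_0_iff: "absv x = 0 \<longleftrightarrow> x = 0" using is_Cp unfolding is_Cp_def by blast
lemma absv_mult: "absv (x * y) = absv x * absv y" using is_Cp unfolding is_Cp_def by blast
lemma absv_add_le_max: "absv (x + y) \<le> max (absv x) (absv y)" using is_Cp unfolding is_Cp_def by blast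
lemma absv_of_nat_p: "absv (of_nat p) = 1 / real p" using is_Cp unfolding is_Cp_def by blast
lemma cauchy_abs_convergent: "cauchy_abs absv X \<Longrightarrow> \<exists>L. conv X L"
  using is_Cp unfolding is_Cp_def by blast

lemma p_gt_1: "p > 1" using prime_p prime_gt_1_nat by blast

lemma absv_0 [simp]: "absv 0 = 0" using absv_eq_0_iff by simp

lemma absv_1 [simp]: "absv 1 = 1"
proof -
  have "absv 1 = absv 1 * absv 1" using absv_mult[of 1 1] by simp
  moreover have "absv 1 \<noteq> 0" using absv_eq_0_iff by simp
  ultimately show ?thesis by (metis mult_cancel_left1)
qed

lemma absv_minus_1 [simp]: "absv (-1) = 1"
proof -
  have "absv (-1) * absv (-1) = 1" using absv_mult[of "-1" "-1"] by simp
  then have "sqrt (absv (-1) * absv (-1)) = 1" by simp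
  then show ?thesis using absv_nonneg[of "-1"] by (simp add: real_sqrt_mult_self)
qed

lemma absv_minus [simp]: "absv (- x) = absv x"
  using absv_mult[of "-1" x] by simp

lemma absv_minus_commute: "absv (x - y) = absv (y - x)"
  using absv_minus[of "x - y"] by simp

lemma absv_diff_le_max: "absv (x - y) \<le> max (absv x) (absv y)"
  using absv_add_le_max[of x "-y"] by simp

lemma absv_diff_triangle: "absv (x - z) \<le> max (absv (x - y)) (absv (y - z))"
  using absv_add_le_max[of "x - y" "y - z"] by simp

lemma absv_add_less: "absv x < e \<Longrightarrow> absv y < e \<Longrightarrow> absv (x + y) < e"
  using absv_add_le_max[of x y] by (metis le_less_trans max_less_iff_conj)

lemma absv_diff_less_trans: "absv (x - y) < e \<Longrightarrow> absv (y - z) < e \<Longrightarrow> absv (x - z) < e"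
  using absv_add_less[of "x - y" e "y - z"] by simp

lemma absv_power: "absv (x ^ n) = absv x ^ n"
  by (induction n) (auto simp: absv_mult)

lemma absv_inverse: "absv (inverse x) = inverse (absv x)"
proof (cases "x = 0")
  case False
  have "absv x * absv (inverse x) = 1" using absv_mult[of x "inverse x"] False by simp
  from inverse_unique[OF this] show ?thesis by simp
qed simp

lemma absv_sign_mult [simp]: "absv ((-1) ^ k * x) = absv x" "absv (x * (-1) ^ k) = absv x"
  by (simp_all add: absv_mult absv_power)

lemma absv_of_nat_le_1: "absv (of_nat n) \<le> 1"
proof (induction n)
  case (Suc n)
  have "absv (of_nat n + 1) \<le> max (absv (of_nat n)) (absv 1)" by (rule absv_add_le_max)
  then show ?case using Suc by (simp add: add.commute)
qed simp

lemma absv_of_int_le_1: "absv (of_int m) \<le> 1"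
proof (cases "m \<ge> 0")
  case True then show ?thesis using absv_of_nat_le_1[of "nat m"] by simp
next
  case False
  then have "(of_int m :: 'a) = - of_nat (nat (-m))" by simp
  then show ?thesis using absv_of_nat_le_1[of "nat (-m)"] by simp
qed

lemma absv_sum_le:
  assumes "finite I" "\<And>i. i \<in> I \<Longrightarrow> absv (f i) \<le> B" "0 \<le> B"
  shows "absv (sum f I) \<le> B"
  using assms
proof (induction I rule: finite_induct)
  case (insert x F)
  have "absv (sum f (insert x F)) \<le> max (absv (f x)) (absv (sum f F))"
    using absv_add_le_max insert.hyps by simp
  moreover have "absv (f x) \<le> B" "absv (sum f F) \<le> B" using insert by simp_all
  ultimately show ?case by simp
qed simp

lemma absv_sum_less:
  assumes "finite I" "\<And>i. i \<in> I \<Longrightarrow> absv (f i) < e" "0 < e"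
  shows "absv (sum f I) < e"
  using assms
proof (induction I rule: finite_induct)
  case (insert x F)
  have "absv (sum f (insert x F)) \<le> max (absv (f x)) (absv (sum f F))"
    using absv_add_le_max insert.hyps by simp
  moreover have "absv (f x) < e" "absv (sum f F) < e" using insert by simp_all
  ultimately show ?case by simp
qed simp

lemma absv_of_int_le_if_dvd:
  assumes "int (p ^ N) dvd m" shows "absv (of_int m :: 'a) \<le> (1 / real p) ^ N"
proof -
  obtain k where k: "m = int (p ^ N) * k" using assms by blast
  have "absv (of_int m :: 'a) = absv ((of_nat p :: 'a) ^ N) * absv (of_int k :: 'a)"
    by (simp add: k absv_mult[symmetric])
  also have "\<dots> = (1 / real p) ^ N * absv (of_int k :: 'a)" by (simp add: absv_power absv_of_nat_p)
  also have "\<dots> \<le> (1 / real p) ^ N" using absv_of_int_le_1[of k] by (simp add: mult_left_le)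
  finally show ?thesis .
qed

lemma absv_of_int_eq_1_if_not_dvd:
  assumes "\<not> int p dvd m" shows "absv (of_int m :: 'a) = 1"
proof -
  have "prime (int p)" using prime_p by simp
  then have "coprime (int p) m" using assms prime_imp_coprime by blast
  then obtain u v where uv: "u * int p + v * m = 1"
    using bezout_int[of "int p" m] by auto
  then have eq: "of_int u * of_nat p + of_int v * of_int m = (1::'a)"
    by (metis of_int_1 of_int_add of_int_mult of_int_of_nat_eq)
  have "1 \<le> max (absv (of_int u * (of_nat p :: 'a))) (absv (of_int v * (of_int m :: 'a)))"
    using absv_add_le_max[of "of_int u * (of_nat p :: 'a)" "of_int v * of_int m"] by (simp only: eq absv_1)
  moreover have "absv (of_int u * (of_nat p :: 'a)) \<le> 1 / real p"
    using absv_of_int_le_1[of u] absv_of_nat_p absv_mult by (simp add: divide_right_mono)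
  moreover have "1 / real p < 1" using p_gt_1 by simp
  moreover have "absv (of_int v * (of_int m :: 'a)) \<le> absv (of_int m :: 'a)"
    using absv_of_int_le_1[of v] absv_mult absv_nonneg by (simp add: mult_left_le_one_le)
  ultimately show ?thesis using absv_of_int_le_1[of m] by linarith
qed

lemma dvd_if_absv_of_int_less:
  assumes "absv (of_int m :: 'a) < (1 / real p) ^ N" shows "int (p ^ N) dvd m"
  using assms
proof (induction N arbitrary: m)
  case (Suc N)
  show ?case
  proof (cases "int p dvd m")
    case True
    then obtain k where k: "m = int p * k" by blast
    have "absv (of_int m :: 'a) = (1 / real p) * absv (of_int k :: 'a)"
      by (simp add: k absv_mult absv_of_nat_p)
    with Suc.prems have "absv (of_int k :: 'a) < (1 / real p) ^ N"
      using p_gt_1 by (simp add: divide_less_cancel)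
    then show ?thesis using Suc.IH by (simp add: k)
  next
    case False
    then have "absv (of_int m :: 'a) = 1" by (rule absv_of_int_eq_1_if_not_dvd)
    moreover have "(1 / real p) ^ Suc N \<le> 1" using p_gt_1 by (intro power_le_one) auto
    ultimately show ?thesis using Suc.prems by linarith
  qed
qed simp

lemma conv_absD: "conv X L \<Longrightarrow> e > 0 \<Longrightarrow> \<exists>M. \<forall>n\<ge>M. absv (X n - L) < e"
  unfolding conv_abs_def by blast

lemma conv_absI: "(\<And>e. e > 0 \<Longrightarrow> \<exists>M. \<forall>n\<ge>M. absv (X n - L) < e) \<Longrightarrow> conv X L"
  unfolding conv_abs_def by blast

lemma conv_abs_eventually_close:
  assumes "conv X L" "conv Y L" "e > 0"
  shows "\<exists>M. \<forall>n\<ge>M. absv (X n - Y n) < e"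
proof -
  obtain M1 where M1: "\<forall>n\<ge>M1. absv (X n - L) < e" using conv_absD[OF assms(1,3)] by blast
  obtain M2 where M2: "\<forall>n\<ge>M2. absv (Y n - L) < e" using conv_absD[OF assms(2,3)] by blast
  have "absv (X n - Y n) < e" if "n \<ge> max M1 M2" for n
    using absv_diff_less_trans[of "X n" L e "Y n"] absv_minus_commute[of "Y n" L] M1 M2 that by auto
  then show ?thesis by blast
qed

lemma conv_abs_unique: assumes "conv X L" "conv X L'" shows "L = L'"
proof (rule ccontr)
  assume "L \<noteq> L'"
  then have d: "absv (L - L') > 0" using absv_eq_0_iff absv_nonneg by (metis eq_iff_diff_eq_0 less_eq_real_def)
  obtain M1 where M1: "\<forall>n\<ge>M1. absv (X n - L) < absv (L - L')" using conv_absD[OF assms(1) d] by blast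
  obtain M2 where M2: "\<forall>n\<ge>M2. absv (X n - L') < absv (L - L')" using conv_absD[OF assms(2) d] by blast
  let ?n = "max M1 M2"
  have "absv (L - L') \<le> max (absv (L - X ?n)) (absv (X ?n - L'))" by (rule absv_diff_triangle)
  moreover have "absv (L - X ?n) < absv (L - L')" using M1 absv_minus_commute by (metis max.cobounded1)
  moreover have "absv (X ?n - L') < absv (L - L')" using M2 by simp
  ultimately show False by simp
qed

lemma conv_abs_const: "conv (\<lambda>n. c) c"
  by (rule conv_absI) auto

lemma conv_abs_add: assumes "conv X L" "conv Y L'" shows "conv (\<lambda>n. X n + Y n) (L + L')"
proof (rule conv_absI)
  fix e :: real assume e: "e > 0"
  obtain M1 where M1: "\<forall>n\<ge>M1. absv (X n - L) < e" using conv_absD[OF assms(1) e] by blast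
  obtain M2 where M2: "\<forall>n\<ge>M2. absv (Y n - L') < e" using conv_absD[OF assms(2) e] by blast
  have "absv (X n + Y n - (L + L')) < e" if "n \<ge> max M1 M2" for n
    using absv_add_less[of "X n - L" e "Y n - L'"] M1 M2 that by (simp add: algebra_simps)
  then show "\<exists>M. \<forall>n\<ge>M. absv (X n + Y n - (L + L')) < e" by blast
qed

lemma conv_abs_cmult: assumes "conv X L" shows "conv (\<lambda>n. c * X n) (c * L)"
proof (cases "c = 0")
  case False
  then have c: "absv c > 0" using absv_eq_0_iff absv_nonneg by (metis less_eq_real_def)
  show ?thesis
  proof (rule conv_absI)
    fix e :: real assume e: "e > 0"
    obtain M where M: "\<forall>n\<ge>M. absv (X n - L) < e / absv c"
      using conv_absD[OF assms, of "e / absv c"] e c by auto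
    have "absv (c * X n - c * L) < e" if "n \<ge> M" for n
    proof -
      have "absv (c * X n - c * L) = absv c * absv (X n - L)"
        by (simp add: absv_mult[symmetric] right_diff_distrib)
      then show ?thesis using M that c by (simp add: field_simps)
    qed
    then show "\<exists>M. \<forall>n\<ge>M. absv (c * X n - c * L) < e" by blast
  qed
qed (simp add: conv_abs_const)

lemma conv_abs_sum:
  assumes "finite I" "\<And>i. i \<in> I \<Longrightarrow> conv (X i) (L i)"
  shows "conv (\<lambda>n. \<Sum>i\<in>I. X i n) (\<Sum>i\<in>I. L i)"
  using assms
proof (induction I rule: finite_induct)
  case (insert x F)
  then have "conv (\<lambda>n. X x n + (\<Sum>i\<in>F. X i n)) (L x + (\<Sum>i\<in>F. L i))"
    by (intro conv_abs_add) auto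
  then show ?case using insert.hyps by simp
qed (simp add: conv_abs_const)

lemma conv_abs_diff: assumes "conv X L" "conv Y L'" shows "conv (\<lambda>n. X n - Y n) (L - L')"
  using conv_abs_add[OF assms(1) conv_abs_cmult[OF assms(2), of "-1"]] by simp

lemma conv_abs_absv_le: assumes "conv X L" "\<And>n. absv (X n) \<le> B" shows "absv L \<le> B"
proof (rule ccontr)
  assume "\<not> absv L \<le> B"
  then have d: "absv L - B > 0" by simp
  obtain M where M: "\<forall>n\<ge>M. absv (X n - L) < absv L - B" using conv_absD[OF assms(1) d] by blast
  have "absv L \<le> max (absv (L - X M)) (absv (X M))" using absv_add_le_max[of "L - X M" "X M"] by simp
  moreover have "absv (L - X M) < absv L - B" using M absv_minus_commute by (metis order_refl)
  moreover have "absv (X M) \<le> B" by (rule assms(2))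
  moreover have "0 \<le> B" using assms(2)[of 0] absv_nonneg[of "X 0"] by simp
  ultimately show False using d by (simp add: max_def split: if_splits)
qed

lemma conv_abs_mult_bounded:
  assumes "conv X L" "conv Y L'" "\<And>n. absv (X n) \<le> 1" "absv L' \<le> 1"
  shows "conv (\<lambda>n. X n * Y n) (L * L')"
proof (rule conv_absI)
  fix e :: real assume e: "e > 0"
  obtain M1 where M1: "\<forall>n\<ge>M1. absv (X n - L) < e" using conv_absD[OF assms(1) e] by blast
  obtain M2 where M2: "\<forall>n\<ge>M2. absv (Y n - L') < e" using conv_absD[OF assms(2) e] by blast
  have "absv (X n * Y n - L * L') < e" if n: "n \<ge> max M1 M2" for n
  proof -
    have "absv (X n * (Y n - L')) \<le> absv (Y n - L')"
      using assms(3)[of n] absv_nonneg by (simp add: absv_mult mult_left_le_one_le)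
    moreover have "absv (L' * (X n - L)) \<le> absv (X n - L)"
      using assms(4) absv_nonneg by (simp add: absv_mult mult_left_le_one_le)
    ultimately have "absv (X n * (Y n - L') + L' * (X n - L)) < e"
      using M1 M2 n by (intro absv_add_less) auto
    then show ?thesis by (simp add: algebra_simps)
  qed
  then show "\<exists>N. \<forall>n\<ge>N. absv (X n * Y n - L * L') < e" by blast
qed

lemma convergent_if_increments_vanish:
  assumes "\<And>e. e > 0 \<Longrightarrow> \<exists>M. \<forall>n\<ge>M. absv (X (Suc n) - X n) < e"
  shows "\<exists>L. conv X L"
proof (rule cauchy_abs_convergent, unfold cauchy_abs_def, intro allI impI)
  fix e :: real assume e: "e > 0"
  obtain M where M: "\<forall>n\<ge>M. absv (X (Suc n) - X n) < e" using assms[OF e] by blast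
  have *: "absv (X m - X n) < e" if "n \<le> m" "M \<le> n" for m n
  proof -
    have "X m - X n = (\<Sum>i = n..<m. X (Suc i) - X i)" using that sum_Suc_diff'[of n m X] by simp
    moreover have "absv (\<Sum>i = n..<m. X (Suc i) - X i) < e"
      using M that e by (intro absv_sum_less) auto
    ultimately show ?thesis by simp
  qed
  have "absv (X m - X n) < e" if "m \<ge> M" "n \<ge> M" for m n
    using *[of n m] *[of m n] absv_minus_commute[of "X m" "X n"] that by (cases "n \<le> m") auto
  then show "\<exists>M. \<forall>m\<ge>M. \<forall>n\<ge>M. absv (X m - X n) < e" by blast
qed

end

section \<open>Powers q^y for y in Z_p\<close>

context Cp_field
begin

lemma absv_eq_1_if_close_1: assumes "absv (1 - z) < 1" shows "absv z = 1"
proof -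
  have "absv z \<le> max (absv 1) (absv (1 - z))" using absv_diff_le_max[of 1 "1 - z"] by simp
  moreover have "absv 1 \<le> max (absv z) (absv (1 - z))" using absv_add_le_max[of z "1 - z"] by simp
  ultimately show ?thesis using assms by (simp add: le_max_iff_disj)
qed

lemma nonzero_if_close_1: "absv (1 - z) < 1 \<Longrightarrow> z \<noteq> 0"
  using absv_eq_1_if_close_1 by fastforce

lemma absv_powi_eq_1: assumes "absv z = 1" shows "absv (z powi k) = 1"
  using assms by (simp add: power_int_def absv_power absv_inverse)

lemma absv_1_minus_power_le: assumes "absv (1 - z) < 1" shows "absv (1 - z ^ k) \<le> absv (1 - z)"
proof (induction k)
  case (Suc k)
  have "1 - z ^ Suc k = (1 - z ^ k) + z ^ k * (1 - z)" by (simp add: algebra_simps)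
  then have "absv (1 - z ^ Suc k) \<le> max (absv (1 - z ^ k)) (absv (z ^ k * (1 - z)))"
    by (simp only: absv_add_le_max)
  moreover have "absv (z ^ k * (1 - z)) = absv (1 - z)"
    using absv_eq_1_if_close_1[OF assms] by (simp add: absv_mult absv_power)
  ultimately show ?case using Suc by simp
qed (simp add: absv_nonneg)

lemma absv_1_minus_power_less_1: "absv (1 - q) < 1 \<Longrightarrow> absv (1 - q ^ w) < 1"
  using absv_1_minus_power_le[of q w] by simp

lemma absv_1_minus_powi_le: assumes "absv (1 - z) < 1" shows "absv (1 - z powi k) \<le> absv (1 - z)"
proof (cases "k \<ge> 0")
  case True then show ?thesis using absv_1_minus_power_le[OF assms] by (simp add: power_int_def)
next
  case False
  define w where "w = z ^ nat (-k)"
  have w: "absv w = 1" using absv_eq_1_if_close_1[OF assms] by (simp add: w_def absv_power)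
  then have "w \<noteq> 0" by auto
  then have "1 - z powi k = (w - 1) * inverse w" using False
    by (simp add: power_int_def w_def power_inverse field_simps)
  moreover have "absv (1 - w) \<le> absv (1 - z)" unfolding w_def by (rule absv_1_minus_power_le[OF assms])
  ultimately show ?thesis using w absv_minus_commute[of w 1] by (simp add: absv_mult absv_inverse)
qed

lemma absv_prime_binomial_le:
  assumes "0 < k" "k < p" shows "absv (of_nat (p choose k) :: 'a) \<le> 1 / real p"
proof -
  have "p dvd (p choose k)" using assms prime_p by (intro dvd_choose_prime) auto
  then obtain m where "p choose k = p * m" by blast
  then show ?thesis using absv_of_nat_le_1[of m] by (simp add: absv_mult absv_of_nat_p divide_right_mono)
qed

text \<open>In (1 + t)^p - 1 the middle binomial coefficients are divisible by p, which is how
  raising to the p-th power contracts the distance to 1.\<close>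
lemma absv_1_minus_power_p_le:
  assumes "absv (1 - z) \<le> c0" "c0 < 1"
  shows "absv (1 - z ^ p) \<le> absv (1 - z) * max (1 / real p) (c0 ^ (p - 1))"
proof -
  define t where "t = z - 1"
  define c where "c = absv (1 - z)"
  define d where "d = max (1 / real p) (c0 ^ (p - 1))"
  have ct: "absv t = c" unfolding t_def c_def by (rule absv_minus_commute)
  have c: "0 \<le> c" "c \<le> c0" "c < 1" using assms absv_nonneg unfolding c_def by auto
  have d: "0 \<le> d" unfolding d_def by (simp add: le_max_iff_disj)
  have "z ^ p = (t + 1) ^ p" by (simp add: t_def)
  also have "\<dots> = (\<Sum>k\<le>p. of_nat (p choose k) * t ^ k)" by (simp add: binomial_ring)
  finally have zp: "z ^ p - 1 = (\<Sum>k\<le>p. of_nat (p choose k) * t ^ k - (if k = 0 then 1 else 0))"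
    by (simp add: sum_subtractf)
  have "absv (of_nat (p choose k) * t ^ k - (if k = 0 then 1 else (0::'a))) \<le> c * d" if "k \<le> p" for k
  proof (cases "k = 0")
    case False
    have ck: "c ^ k \<le> c" using False c power_decreasing[of 1 k c] by simp
    show ?thesis
    proof (cases "k = p")
      case True
      have "c ^ p = c * c ^ (p - 1)" using p_gt_1 by (simp add: power_eq_if)
      also have "\<dots> \<le> c * c0 ^ (p - 1)" using c by (intro mult_left_mono power_mono) auto
      also have "\<dots> \<le> c * d" unfolding d_def using c by (intro mult_left_mono) auto
      finally show ?thesis using True False by (simp add: absv_power ct)
    next
      case False
      then have "absv (of_nat (p choose k) :: 'a) * c ^ k \<le> (1 / real p) * c"
        using ck c absv_nonneg \<open>k \<noteq> 0\<close> \<open>k \<le> p\<close> absv_prime_binomial_le[of k]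
        by (intro mult_mono) auto
      also have "\<dots> \<le> d * c" unfolding d_def using c by (intro mult_right_mono) auto
      finally show ?thesis using \<open>k \<noteq> 0\<close> by (simp add: absv_mult absv_power ct mult.commute)
    qed
  qed (simp add: c d)
  then have "absv (z ^ p - 1) \<le> c * d" unfolding zp using c d by (intro absv_sum_le) auto
  then show ?thesis unfolding c_def d_def using absv_minus_commute by metis
qed

lemma absv_1_minus_power_p_power_le:
  assumes "absv (1 - z) < 1"
  shows "absv (1 - z ^ (p ^ N)) \<le> absv (1 - z) * max (1 / real p) (absv (1 - z) ^ (p - 1)) ^ N"
proof (induction N)
  case (Suc N)
  define c0 where "c0 = absv (1 - z)"
  define d where "d = max (1 / real p) (c0 ^ (p - 1))"
  have c0: "0 \<le> c0" "c0 < 1" using assms absv_nonneg unfolding c0_def by auto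
  have d: "0 \<le> d" "d \<le> 1" unfolding d_def using c0 p_gt_1 by (auto intro: power_le_one simp: le_max_iff_disj)
  define w where "w = z ^ (p ^ N)"
  have w: "absv (1 - w) \<le> c0 * d ^ N" using Suc unfolding w_def c0_def d_def by simp
  also have "c0 * d ^ N \<le> c0" using c0 d by (simp add: mult_left_le power_le_one)
  finally have w0: "absv (1 - w) \<le> c0" .
  have "z ^ (p ^ Suc N) = w ^ p" by (simp add: w_def power_mult[symmetric] mult.commute)
  then have "absv (1 - z ^ (p ^ Suc N)) \<le> absv (1 - w) * d"
    using absv_1_minus_power_p_le[OF w0 c0(2)] unfolding d_def by simp
  also have "\<dots> \<le> c0 * d ^ N * d" using w d by (intro mult_right_mono) auto
  also have "\<dots> = c0 * d ^ Suc N" by (simp add: algebra_simps)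
  finally show ?case unfolding c0_def d_def .
qed simp

lemma powi_close_1_if_dvd:
  assumes "absv (1 - Q) < 1" "e > 0"
  shows "\<exists>N. \<forall>m. int (p ^ N) dvd m \<longrightarrow> absv (1 - Q powi m) < e"
proof -
  define c0 where "c0 = absv (1 - Q)"
  define d where "d = max (1 / real p) (c0 ^ (p - 1))"
  have c0: "0 \<le> c0" "c0 < 1" using assms absv_nonneg unfolding c0_def by auto
  have "c0 ^ (p - 1) \<le> c0 ^ 1" using c0 p_gt_1 by (intro power_decreasing) auto
  then have d: "0 \<le> d" "d < 1" unfolding d_def using c0 p_gt_1 by (auto simp: le_max_iff_disj)
  obtain N where N: "d ^ N < e" using real_arch_pow_inv[OF assms(2) d(2)] by blast
  have "absv (1 - Q powi m) < e" if m: "int (p ^ N) dvd m" for m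
  proof -
    obtain k where k: "m = int (p ^ N) * k" using m by blast
    define W where "W = Q ^ (p ^ N)"
    have "absv (1 - W) \<le> c0 * d ^ N"
      using absv_1_minus_power_p_power_le[OF assms(1), of N] unfolding W_def c0_def d_def .
    moreover have "c0 * d ^ N \<le> d ^ N" "c0 * d ^ N \<le> c0" using c0 d
      by (simp_all add: mult_left_le_one_le mult_left_le power_le_one)
    ultimately have W: "absv (1 - W) < 1" "absv (1 - W) < e" using N c0 by linarith+
    have "Q powi m = W powi k" unfolding k W_def by (simp only: power_int_mult power_int_of_nat)
    then show ?thesis using absv_1_minus_powi_le[OF W(1), of k] W(2) by simp
  qed
  then show ?thesis by blast
qed

lemma powi_diff_small_if_dvd:
  assumes Q: "absv (1 - Q) < 1" and N: "\<forall>m. int (p ^ N) dvd m \<longrightarrow> absv (1 - Q powi m) < e"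
    and "int (p ^ N) dvd (a - b)"
  shows "absv (Q powi a - Q powi b) < e"
proof -
  have "absv (1 - Q powi (a - b)) < e" using N assms(3) by blast
  moreover have "Q powi a - Q powi b = - (Q powi b * (1 - Q powi (a - b)))"
    using nonzero_if_close_1[OF Q] by (simp add: algebra_simps power_int_diff)
  ultimately show ?thesis
    using absv_powi_eq_1[OF absv_eq_1_if_close_1[OF Q]] by (simp add: absv_mult)
qed

lemma powi_uniformly_close:
  assumes Q: "absv (1 - Q) < 1" and "e > 0"
  shows "\<exists>\<delta>>0. \<forall>a b. absv (of_int a - of_int b :: 'a) < \<delta> \<longrightarrow> absv (Q powi a - Q powi b) < e"
proof -
  obtain N where N: "\<forall>m. int (p ^ N) dvd m \<longrightarrow> absv (1 - Q powi m) < e"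
    using powi_close_1_if_dvd[OF assms] by blast
  have "absv (Q powi a - Q powi b) < e" if "absv (of_int a - of_int b :: 'a) < (1 / real p) ^ N" for a b
    using that dvd_if_absv_of_int_less[of "a - b" N] powi_diff_small_if_dvd[OF Q N] by simp
  moreover have "(1 / real p) ^ N > 0" using p_gt_1 by simp
  ultimately show ?thesis by blast
qed

lemma conv_abs_cauchy:
  assumes "conv X L" "e > 0" shows "\<exists>M. \<forall>m\<ge>M. \<forall>n\<ge>M. absv (X m - X n) < e"
proof -
  obtain M where M: "\<forall>n\<ge>M. absv (X n - L) < e" using conv_absD[OF assms] by blast
  have "absv (X m - X n) < e" if "m \<ge> M" "n \<ge> M" for m n
    using absv_diff_less_trans[of "X m" L e "X n"] absv_minus_commute[of "X n" L] M that by auto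
  then show ?thesis by blast
qed

lemma powi_convergent:
  assumes Q: "absv (1 - Q) < 1" and s: "conv (\<lambda>k. of_int (s k)) z"
  shows "\<exists>L. conv (\<lambda>k. Q powi s k) L"
proof (rule cauchy_abs_convergent, unfold cauchy_abs_def, intro allI impI)
  fix e :: real assume "e > 0"
  then obtain \<delta> where \<delta>: "\<delta> > 0" "\<forall>a b. absv (of_int a - of_int b :: 'a) < \<delta> \<longrightarrow> absv (Q powi a - Q powi b) < e"
    using powi_uniformly_close[OF Q] by blast
  then show "\<exists>M. \<forall>m\<ge>M. \<forall>n\<ge>M. absv (Q powi s m - Q powi s n) < e"
    using conv_abs_cauchy[OF s \<delta>(1)] by meson
qed

lemma powi_conv_same_limit:
  assumes Q: "absv (1 - Q) < 1"
    and s: "conv (\<lambda>k. of_int (s k)) z" and s': "conv (\<lambda>k. of_int (s' k)) z"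
    and L: "conv (\<lambda>k. Q powi s k) L"
  shows "conv (\<lambda>k. Q powi s' k) L"
proof (rule conv_absI)
  fix e :: real assume "e > 0"
  then obtain \<delta> where \<delta>: "\<delta> > 0" "\<forall>a b. absv (of_int a - of_int b :: 'a) < \<delta> \<longrightarrow> absv (Q powi a - Q powi b) < e"
    using powi_uniformly_close[OF Q] by blast
  obtain M1 where M1: "\<forall>n\<ge>M1. absv (Q powi s' n - Q powi s n) < e"
    using conv_abs_eventually_close[OF s' s \<delta>(1)] \<delta>(2) by meson
  obtain M2 where M2: "\<forall>n\<ge>M2. absv (Q powi s n - L) < e" using conv_absD[OF L \<open>e > 0\<close>] by blast
  have "absv (Q powi s' n - L) < e" if "n \<ge> max M1 M2" for n
    using absv_diff_less_trans[of "Q powi s' n" "Q powi s n" e L] M1 M2 that by auto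
  then show "\<exists>M. \<forall>n\<ge>M. absv (Q powi s' n - L) < e" by blast
qed

lemma qpow_limit:
  assumes Q: "absv (1 - Q) < 1" and s: "conv (\<lambda>k. of_int (s k)) z"
  shows "conv (\<lambda>k. Q powi s k) (qpow absv Q z)"
proof -
  obtain L where L: "conv (\<lambda>k. Q powi s k) L" using powi_convergent[OF Q s] by blast
  have all: "\<forall>s'. conv (\<lambda>k. of_int (s' k)) z \<longrightarrow> conv (\<lambda>k. Q powi s' k) L"
    using powi_conv_same_limit[OF Q s _ L] by blast
  have "qpow absv Q z = L" unfolding qpow_def
  proof (rule the_equality)
    fix y assume "\<forall>s'. conv (\<lambda>k. of_int (s' k)) z \<longrightarrow> conv (\<lambda>k. Q powi s' k) y"
    then show "y = L" using s L conv_abs_unique by blast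
  qed (rule all)
  then show ?thesis using L by simp
qed

lemma Zp_of_int: "(of_int m :: 'a) \<in> Zp absv"
  unfolding Zp_def using conv_abs_const[of "of_int m :: 'a"] by (intro CollectI exI[of _ "\<lambda>_. m"]) simp

lemma Zp_of_nat: "(of_nat m :: 'a) \<in> Zp absv"
  using Zp_of_int[of "int m"] by simp

lemma Zp_add: assumes "A \<in> Zp absv" "B \<in> Zp absv" shows "A + B \<in> Zp absv"
proof -
  obtain s1 where s1: "conv (\<lambda>k. of_int (s1 k)) A" using assms(1) unfolding Zp_def by blast
  obtain s2 where s2: "conv (\<lambda>k. of_int (s2 k)) B" using assms(2) unfolding Zp_def by blast
  have "conv (\<lambda>k. of_int (s1 k + s2 k)) (A + B)" using conv_abs_add[OF s1 s2] by simp
  then show ?thesis unfolding Zp_def by (intro CollectI exI[of _ "\<lambda>k. s1 k + s2 k"])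
qed

lemma Zp_of_nat_mult: assumes "A \<in> Zp absv" shows "of_nat c * A \<in> Zp absv"
proof -
  obtain s where s: "conv (\<lambda>k. of_int (s k)) A" using assms unfolding Zp_def by blast
  have "conv (\<lambda>k. of_int (int c * s k)) (of_nat c * A)" using conv_abs_cmult[OF s, of "of_nat c"] by simp
  then show ?thesis unfolding Zp_def by (intro CollectI exI[of _ "\<lambda>k. int c * s k"])
qed

lemma qpow_of_int: assumes "absv (1 - Q) < 1" shows "qpow absv Q (of_int m) = Q powi m"
  using qpow_limit[OF assms, of "\<lambda>_. m"] conv_abs_const conv_abs_unique by fastforce

lemma qpow_of_nat: assumes "absv (1 - Q) < 1" shows "qpow absv Q (of_nat m) = Q ^ m"
  using qpow_of_int[OF assms, of "int m"] by simp

lemma qpow_1: assumes "z \<in> Zp absv" shows "qpow absv 1 z = 1"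
proof -
  obtain s where s: "conv (\<lambda>k. of_int (s k)) z" using assms unfolding Zp_def by blast
  show ?thesis using qpow_limit[of 1, OF _ s] conv_abs_const[of "1::'a"] conv_abs_unique by simp
qed

lemma qpow_add:
  assumes Q: "absv (1 - Q) < 1" and A: "A \<in> Zp absv" and B: "B \<in> Zp absv"
  shows "qpow absv Q (A + B) = qpow absv Q A * qpow absv Q B"
proof -
  obtain s1 where s1: "conv (\<lambda>k. of_int (s1 k)) A" using A unfolding Zp_def by blast
  obtain s2 where s2: "conv (\<lambda>k. of_int (s2 k)) B" using B unfolding Zp_def by blast
  have Q1: "absv Q = 1" "Q \<noteq> 0" using absv_eq_1_if_close_1[OF Q] nonzero_if_close_1[OF Q] by auto
  have s: "conv (\<lambda>k. of_int (s1 k + s2 k)) (A + B)" using conv_abs_add[OF s1 s2] by simp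
  have "absv (qpow absv Q B) \<le> 1"
    using conv_abs_absv_le[OF qpow_limit[OF Q s2]] absv_powi_eq_1[OF Q1(1)] by simp
  then have "conv (\<lambda>k. Q powi s1 k * Q powi s2 k) (qpow absv Q A * qpow absv Q B)"
    using qpow_limit[OF Q s1] qpow_limit[OF Q s2] absv_powi_eq_1[OF Q1(1)]
    by (intro conv_abs_mult_bounded) auto
  then have "conv (\<lambda>k. Q powi (s1 k + s2 k)) (qpow absv Q A * qpow absv Q B)"
    using Q1 by (simp add: power_int_add)
  then show ?thesis using qpow_limit[OF Q s] conv_abs_unique by blast
qed

lemma qpow_of_nat_mult:
  assumes q: "absv (1 - q) < 1" and A: "A \<in> Zp absv"
  shows "qpow absv q (of_nat w * A) = qpow absv (q ^ w) A"
proof -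
  obtain s where s: "conv (\<lambda>k. of_int (s k)) A" using A unfolding Zp_def by blast
  have ws: "conv (\<lambda>k. of_int (int w * s k)) (of_nat w * A)" using conv_abs_cmult[OF s, of "of_nat w"] by simp
  have "q powi (int w * s k) = (q ^ w) powi s k" for k by (simp add: power_int_mult)
  then show ?thesis
    using qpow_limit[OF q ws] qpow_limit[OF absv_1_minus_power_less_1[OF q] s] conv_abs_unique by simp
qed

lemma qnum_add:
  assumes Q: "absv (1 - Q) < 1" and B: "B \<in> Zp absv" and C: "C \<in> Zp absv"
  shows "qnum absv Q (B + C) = qpow absv Q C * qnum absv Q B + qnum absv Q C"
proof (cases "Q = 1")
  case True then show ?thesis using qpow_1[OF C] by (simp add: qnum_def)
next
  case False
  then show ?thesis using qpow_add[OF Q B C] by (simp add: qnum_def field_simps)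
qed

lemma qnum_of_nat_mult:
  assumes q: "absv (1 - q) < 1" and A: "A \<in> Zp absv"
  shows "qnum absv q (of_nat w * A) = qnum absv q (of_nat w) * qnum absv (q ^ w) A"
proof (cases "q = 1 \<or> q ^ w = 1")
  case True
  then show ?thesis using qpow_of_nat[OF q, of w] qpow_of_nat_mult[OF q A] qpow_1[OF A]
    by (auto simp: qnum_def)
next
  case False
  then show ?thesis using qpow_of_nat[OF q, of w] qpow_of_nat_mult[OF q A]
    by (simp add: qnum_def)
qed

lemma qnum_dilation_shift:
  assumes q: "absv (1 - q) < 1" and A: "A \<in> Zp absv"
  shows "qnum absv q (of_nat u * A + of_nat v * of_nat J)
       = qnum absv q (of_nat v) * qnum absv (q ^ v) (of_nat J)
         + (q ^ v) ^ J * (qnum absv q (of_nat u) * qnum absv (q ^ u) A)"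
proof -
  have "qnum absv q (of_nat u * A + of_nat v * of_nat J)
      = qpow absv q (of_nat v * of_nat J) * qnum absv q (of_nat u * A) + qnum absv q (of_nat v * of_nat J)"
    by (rule qnum_add[OF q Zp_of_nat_mult[OF A] Zp_of_nat_mult[OF Zp_of_nat]])
  moreover have "qpow absv q (of_nat v * of_nat J) = (q ^ v) ^ J"
    using qpow_of_nat[OF q, of "v * J"] by (simp add: power_mult)
  ultimately show ?thesis
    by (simp add: qnum_of_nat_mult[OF q A] qnum_of_nat_mult[OF q Zp_of_nat] add.commute)
qed

end

section \<open>The fermionic integral\<close>

lemma sum_lessThan_add: "(\<Sum>y<(a::nat)+b. g y) = (\<Sum>y<a. g y) + (\<Sum>y<b. g (a + y))"
  by (induction b) (auto simp: add.assoc)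

lemma sum_lessThan_mult: "(\<Sum>y<(m::nat)*n. g y) = (\<Sum>k<m. \<Sum>a<n. g (a + k*n))"
proof (induction m)
  case (Suc m)
  have "(\<Sum>y<m * n + n. g y) = (\<Sum>y<m*n. g y) + (\<Sum>a<n. g (m * n + a))"
    by (rule sum_lessThan_add)
  then show ?case using Suc by (simp add: add.commute)
qed simp

lemma sum_minus_one_power_odd: "odd w \<Longrightarrow> (\<Sum>k<w. (-1::'a::comm_ring_1) ^ k) = 1"
proof -
  assume "odd w"
  then obtain m where m: "w = Suc (2 * m)" by (metis oddE Suc_eq_plus1)
  have "(\<Sum>k<Suc (2 * m). (-1::'a) ^ k) = 1"
    by (induction m) (auto simp: power_add)
  then show ?thesis using m by simp
qed

lemma minus_one_power_mult_odd: "odd M \<Longrightarrow> (-1::'a::comm_ring_1) ^ (k * M) = (-1) ^ k"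
  by (metis mult.commute power_mult neg_one_odd_power)

lemma alternating_sum_blocks_diff:
  fixes \<phi> :: "nat \<Rightarrow> 'a::comm_ring_1"
  assumes "odd w" "odd M"
  shows "(\<Sum>y<w*M. \<phi> y * (-1) ^ y) - (\<Sum>a<M. \<phi> a * (-1) ^ a)
       = (\<Sum>a<M. \<Sum>k<w. (-1) ^ a * (-1) ^ k * (\<phi> (a + k*M) - \<phi> a))"
proof -
  have 1: "(\<Sum>y<w*M. \<phi> y * (-1) ^ y) = (\<Sum>a<M. \<Sum>k<w. (-1) ^ a * (-1) ^ k * \<phi> (a + k*M))"
    unfolding sum_lessThan_mult
    by (subst sum.swap) (simp add: power_add minus_one_power_mult_odd[OF assms(2)] mult_ac)
  have "(\<Sum>a<M. \<Sum>k<w. (-1) ^ a * (-1) ^ k * \<phi> a) = (\<Sum>a<M. ((-1) ^ a * \<phi> a) * (\<Sum>k<w. (-1) ^ k))"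
    by (simp add: sum_distrib_left mult_ac)
  then have 2: "(\<Sum>a<M. \<phi> a * (-1) ^ a) = (\<Sum>a<M. \<Sum>k<w. (-1) ^ a * (-1) ^ k * \<phi> a)"
    using sum_minus_one_power_odd[OF assms(1), where 'a='a] by (simp add: mult_ac)
  show ?thesis unfolding 1 2 by (simp add: sum_subtractf right_diff_distrib)
qed

context Cp_field
begin

text \<open>Uniform continuity for the p-adic topology, seen only at the natural numbers: these are
  the only points the fermionic partial sums look at.\<close>
definition p_unif_cont :: "('a \<Rightarrow> 'a) \<Rightarrow> bool" where
  "p_unif_cont f \<longleftrightarrow> (\<forall>e>0. \<exists>N. \<forall>a b. int (p ^ N) dvd (int b - int a) \<longrightarrow>
      absv (f (of_nat a) - f (of_nat b)) < e)"

lemma p_unif_contD: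
  "p_unif_cont f \<Longrightarrow> e > 0 \<Longrightarrow>
    \<exists>N. \<forall>a b. int (p ^ N) dvd (int b - int a) \<longrightarrow> absv (f (of_nat a) - f (of_nat b)) < e"
  unfolding p_unif_cont_def by blast

lemma p_unif_cont_affine:
  assumes "p_unif_cont f" shows "p_unif_cont (\<lambda>y. f (of_nat t + of_nat w * y))"
  unfolding p_unif_cont_def
proof (intro allI impI)
  fix e :: real assume "e > 0"
  then obtain N where N: "\<forall>a b. int (p ^ N) dvd (int b - int a) \<longrightarrow> absv (f (of_nat a) - f (of_nat b)) < e"
    using p_unif_contD[OF assms] by blast
  have "absv (f (of_nat t + of_nat w * of_nat a) - f (of_nat t + of_nat w * of_nat b)) < e"
    if "int (p ^ N) dvd (int b - int a)" for a b
  proof -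
    have "int (p ^ N) dvd (int (t + w * b) - int (t + w * a))"
      using that by (simp add: right_diff_distrib[symmetric])
    then show ?thesis using N by (metis of_nat_add of_nat_mult)
  qed
  then show "\<exists>N. \<forall>a b. int (p ^ N) dvd (int b - int a) \<longrightarrow>
      absv (f (of_nat t + of_nat w * of_nat a) - f (of_nat t + of_nat w * of_nat b)) < e"
    by blast
qed

end

locale odd_Cp_field = Cp_field +
  assumes odd_p: "odd p"
begin

definition fsum :: "('a \<Rightarrow> 'a) \<Rightarrow> nat \<Rightarrow> 'a" where
  "fsum f N = (\<Sum>y<p ^ N. f (of_nat y) * (-1) ^ y)"

lemma fint_eqI: assumes "conv (fsum f) L" shows "fint p absv f = L"
proof -
  have "(\<lambda>N. \<Sum>y<p ^ N. f (of_nat y) * (-1) ^ y) = fsum f" by (simp add: fsum_def fun_eq_iff)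
  then show ?thesis unfolding fint_def
    using assms conv_abs_unique by (intro the_equality) auto
qed

lemma fint_cong: assumes "\<And>n. f (of_nat n) = g (of_nat n)" shows "fint p absv f = fint p absv g"
  unfolding fint_def using assms by simp

lemma fsum_odd_multiple_close:
  assumes "odd w" "N0 \<le> N"
    and N0: "\<forall>a b. int (p ^ N0) dvd (int b - int a) \<longrightarrow> absv (f (of_nat a) - f (of_nat b)) < e"
    and "e > 0"
  shows "absv ((\<Sum>y<w * p ^ N. f (of_nat y) * (-1) ^ y) - fsum f N) < e"
proof -
  have "(\<Sum>y<w * p ^ N. f (of_nat y) * (-1) ^ y) - fsum f N
      = (\<Sum>a<p^N. \<Sum>k<w. (-1) ^ a * (-1) ^ k * (f (of_nat (a + k * p^N)) - f (of_nat a)))"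
    unfolding fsum_def using alternating_sum_blocks_diff[OF assms(1), of "p ^ N" "\<lambda>y. f (of_nat y)"] odd_p
    by simp
  also have "absv \<dots> < e"
  proof (intro absv_sum_less \<open>e > 0\<close>)
    fix a k
    have "int (p ^ N0) dvd int (p ^ N)" using \<open>N0 \<le> N\<close> by (simp add: le_imp_power_dvd)
    then have "int (p ^ N0) dvd (int a - int (a + k * p ^ N))" by simp
    then have "absv (f (of_nat (a + k * p ^ N)) - f (of_nat a)) < e" using N0 by blast
    then show "absv ((-1) ^ a * (-1) ^ k * (f (of_nat (a + k * p ^ N)) - f (of_nat a))) < e"
      by (simp only: mult.assoc absv_sign_mult)
  qed auto
  finally show ?thesis .
qed

lemma fsum_convergent: assumes "p_unif_cont f" shows "\<exists>L. conv (fsum f) L"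
proof (rule convergent_if_increments_vanish)
  fix e :: real assume "e > 0"
  then obtain N0 where N0: "\<forall>a b. int (p ^ N0) dvd (int b - int a) \<longrightarrow> absv (f (of_nat a) - f (of_nat b)) < e"
    using p_unif_contD[OF assms] by blast
  have "absv (fsum f (Suc N) - fsum f N) < e" if "N \<ge> N0" for N
    using fsum_odd_multiple_close[OF odd_p that N0 \<open>e > 0\<close>] by (simp add: fsum_def)
  then show "\<exists>M. \<forall>n\<ge>M. absv (fsum f (Suc n) - fsum f n) < e" by blast
qed

lemma fsum_conv_fint: assumes "p_unif_cont f" shows "conv (fsum f) (fint p absv f)"
  using fsum_convergent[OF assms] fint_eqI by auto

lemma fint_sum:
  assumes "finite I" "\<And>i. i \<in> I \<Longrightarrow> p_unif_cont (f i)"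
  shows "fint p absv (\<lambda>y. \<Sum>i\<in>I. c i * f i y) = (\<Sum>i\<in>I. c i * fint p absv (f i))"
proof (rule fint_eqI)
  have "fsum (\<lambda>y. \<Sum>i\<in>I. c i * f i y) = (\<lambda>N. \<Sum>i\<in>I. c i * fsum (f i) N)"
    by (simp add: fun_eq_iff fsum_def sum_distrib_left sum_distrib_right mult_ac sum.swap[of _ I])
  moreover have "conv (\<lambda>N. \<Sum>i\<in>I. c i * fsum (f i) N) (\<Sum>i\<in>I. c i * fint p absv (f i))"
    using assms by (intro conv_abs_sum conv_abs_cmult fsum_conv_fint) auto
  ultimately show "conv (fsum (\<lambda>y. \<Sum>i\<in>I. c i * f i y)) (\<Sum>i\<in>I. c i * fint p absv (f i))" by simp
qed

lemma fint_odd_dilation: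
  assumes "p_unif_cont f" "odd w"
  shows "fint p absv f = (\<Sum>t<w. (-1) ^ t * fint p absv (\<lambda>y. f (of_nat t + of_nat w * y)))"
proof (rule fint_eqI)
  define g where "g t = (\<lambda>y. f (of_nat t + of_nat w * y))" for t
  have g: "g t (of_nat k) = f (of_nat (t + k * w))" for t k by (simp add: g_def algebra_simps)
  define U where "U N = (\<Sum>y<w * p ^ N. f (of_nat y) * (-1) ^ y)" for N
  have "U N = (\<Sum>k<p^N. \<Sum>t<w. f (of_nat (t + k * w)) * (-1) ^ (t + k * w))" for N
    unfolding U_def by (subst mult.commute) (rule sum_lessThan_mult)
  also have "\<dots> N = (\<Sum>k<p^N. \<Sum>t<w. (-1) ^ t * (g t (of_nat k) * (-1) ^ k))" for N
    by (simp add: g power_add minus_one_power_mult_odd[OF assms(2)] mult_ac)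
  also have "\<dots> N = (\<Sum>t<w. (-1) ^ t * fsum (g t) N)" for N
    by (subst sum.swap) (simp add: fsum_def sum_distrib_left)
  finally have U: "U N = (\<Sum>t<w. (-1) ^ t * fsum (g t) N)" for N .
  have "conv (\<lambda>N. \<Sum>t<w. (-1) ^ t * fsum (g t) N) (\<Sum>t<w. (-1) ^ t * fint p absv (g t))"
    unfolding g_def using assms(1)
    by (intro conv_abs_sum conv_abs_cmult fsum_conv_fint p_unif_cont_affine) auto
  then have "conv U (\<Sum>t<w. (-1) ^ t * fint p absv (g t))"
    by (simp only: U[symmetric])
  moreover have "conv (\<lambda>N. U N - fsum f N) 0"
  proof (rule conv_absI)
    fix e :: real assume "e > 0"
    then obtain N0 where N0: "\<forall>a b. int (p ^ N0) dvd (int b - int a) \<longrightarrow> absv (f (of_nat a) - f (of_nat b)) < e"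
      using p_unif_contD[OF assms(1)] by blast
    then show "\<exists>M. \<forall>N\<ge>M. absv (U N - fsum f N - 0) < e"
      using fsum_odd_multiple_close[OF assms(2) _ N0 \<open>e > 0\<close>] unfolding U_def by auto
  qed
  ultimately show "conv (fsum f) (\<Sum>t<w. (-1) ^ t * fint p absv (\<lambda>y. f (of_nat t + of_nat w * y)))"
    using conv_abs_diff by (fastforce simp: g_def)
qed

end

section \<open>Iterated fermionic integrals\<close>

context Cp_field
begin

text \<open>Index vectors are close when all their coordinates are congruent modulo a high power of p;
  integrands of iterated integrals are handled through their restriction to such vectors.\<close>
definition bounded_p_unif_cont :: "((nat \<Rightarrow> nat) \<Rightarrow> 'a) \<Rightarrow> bool" where
  "bounded_p_unif_cont G \<longleftrightarrow> (\<exists>B. \<forall>a. absv (G a) \<le> B) \<and>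
     (\<forall>e>0. \<exists>N. \<forall>a b. (\<forall>l. int (p ^ N) dvd (int (b l) - int (a l))) \<longrightarrow> absv (G a - G b) < e)"

lemma bounded_p_unif_contI:
  assumes "\<And>a. absv (G a) \<le> B"
    and "\<And>e. e > 0 \<Longrightarrow> \<exists>N. \<forall>a b. (\<forall>l. int (p ^ N) dvd (int (b l) - int (a l))) \<longrightarrow> absv (G a - G b) < e"
  shows "bounded_p_unif_cont G"
  unfolding bounded_p_unif_cont_def using assms by blast

lemma bounded_p_unif_contD:
  "bounded_p_unif_cont G \<Longrightarrow> e > 0 \<Longrightarrow>
    \<exists>N. \<forall>a b. (\<forall>l. int (p ^ N) dvd (int (b l) - int (a l))) \<longrightarrow> absv (G a - G b) < e"
  unfolding bounded_p_unif_cont_def by blast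

lemma bounded_p_unif_cont_bound: "bounded_p_unif_cont G \<Longrightarrow> \<exists>B>0. \<forall>a. absv (G a) \<le> B"
  unfolding bounded_p_unif_cont_def by (meson absv_nonneg gt_ex le_less_trans less_imp_le order_trans)

lemma dvd_power_mono: "N' \<le> N \<Longrightarrow> int (p ^ N) dvd x \<Longrightarrow> int (p ^ N') dvd x"
  by (meson dvd_trans le_imp_power_dvd of_nat_dvd_iff)

lemma bounded_p_unif_cont_const: "bounded_p_unif_cont (\<lambda>a. c)"
  by (rule bounded_p_unif_contI[of _ "absv c"]) auto

lemma bounded_p_unif_cont_add:
  assumes "bounded_p_unif_cont G" "bounded_p_unif_cont H"
  shows "bounded_p_unif_cont (\<lambda>a. G a + H a)"
proof -
  obtain B1 where B1: "\<forall>a. absv (G a) \<le> B1" using assms(1) unfolding bounded_p_unif_cont_def by blast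
  obtain B2 where B2: "\<forall>a. absv (H a) \<le> B2" using assms(2) unfolding bounded_p_unif_cont_def by blast
  show ?thesis
  proof (rule bounded_p_unif_contI[of _ "max B1 B2"])
    fix a show "absv (G a + H a) \<le> max B1 B2"
      using absv_add_le_max[of "G a" "H a"] B1 B2 by (smt (verit))
  next
    fix e :: real assume e: "e > 0"
    obtain N1 where N1: "\<forall>a b. (\<forall>l. int (p ^ N1) dvd (int (b l) - int (a l))) \<longrightarrow> absv (G a - G b) < e"
      using bounded_p_unif_contD[OF assms(1) e] by blast
    obtain N2 where N2: "\<forall>a b. (\<forall>l. int (p ^ N2) dvd (int (b l) - int (a l))) \<longrightarrow> absv (H a - H b) < e"
      using bounded_p_unif_contD[OF assms(2) e] by blast
    have "absv (G a + H a - (G b + H b)) < e"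
      if d: "\<forall>l. int (p ^ max N1 N2) dvd (int (b l) - int (a l))" for a b
    proof -
      have "absv (G a - G b) < e" "absv (H a - H b) < e"
        using N1 N2 d dvd_power_mono[of N1 "max N1 N2"] dvd_power_mono[of N2 "max N1 N2"] by auto
      then show ?thesis using absv_add_less[of "G a - G b" e "H a - H b"] by (simp add: algebra_simps)
    qed
    then show "\<exists>N. \<forall>a b. (\<forall>l. int (p ^ N) dvd (int (b l) - int (a l))) \<longrightarrow> absv (G a + H a - (G b + H b)) < e"
      by blast
  qed
qed

lemma bounded_p_unif_cont_mult:
  assumes "bounded_p_unif_cont G" "bounded_p_unif_cont H"
  shows "bounded_p_unif_cont (\<lambda>a. G a * H a)"
proof -
  obtain B1 where B1: "B1 > 0" "\<forall>a. absv (G a) \<le> B1" using bounded_p_unif_cont_bound[OF assms(1)] by blast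
  obtain B2 where B2: "B2 > 0" "\<forall>a. absv (H a) \<le> B2" using bounded_p_unif_cont_bound[OF assms(2)] by blast
  show ?thesis
  proof (rule bounded_p_unif_contI[of _ "B1 * B2"])
    fix a show "absv (G a * H a) \<le> B1 * B2"
      using B1 B2 absv_nonneg by (simp add: absv_mult mult_mono)
  next
    fix e :: real assume e: "e > 0"
    obtain N1 where N1: "\<forall>a b. (\<forall>l. int (p ^ N1) dvd (int (b l) - int (a l))) \<longrightarrow> absv (G a - G b) < e / B2"
      using bounded_p_unif_contD[OF assms(1)] e B2 by (meson divide_pos_pos)
    obtain N2 where N2: "\<forall>a b. (\<forall>l. int (p ^ N2) dvd (int (b l) - int (a l))) \<longrightarrow> absv (H a - H b) < e / B1"
      using bounded_p_unif_contD[OF assms(2)] e B1 by (meson divide_pos_pos)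
    have "absv (G a * H a - G b * H b) < e"
      if d: "\<forall>l. int (p ^ max N1 N2) dvd (int (b l) - int (a l))" for a b
    proof -
      have g: "absv (G a - G b) < e / B2" using N1 d dvd_power_mono[of N1 "max N1 N2"] by auto
      have h: "absv (H a - H b) < e / B1" using N2 d dvd_power_mono[of N2 "max N1 N2"] by auto
      have "absv (G a * (H a - H b)) \<le> B1 * absv (H a - H b)"
        using B1 absv_nonneg by (simp add: absv_mult mult_right_mono)
      also have "\<dots> < e" using h B1 by (simp add: field_simps)
      moreover have "absv (H b * (G a - G b)) \<le> B2 * absv (G a - G b)"
        using B2 absv_nonneg by (simp add: absv_mult mult_right_mono)
      moreover have "\<dots> < e" using g B2 by (simp add: field_simps)
      ultimately have "absv (G a * (H a - H b) + H b * (G a - G b)) < e"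
        by (intro absv_add_less) auto
      then show ?thesis by (simp add: algebra_simps)
    qed
    then show "\<exists>N. \<forall>a b. (\<forall>l. int (p ^ N) dvd (int (b l) - int (a l))) \<longrightarrow> absv (G a * H a - G b * H b) < e"
      by blast
  qed
qed

lemma bounded_p_unif_cont_power: "bounded_p_unif_cont G \<Longrightarrow> bounded_p_unif_cont (\<lambda>a. G a ^ m)"
  by (induction m) (auto intro: bounded_p_unif_cont_mult bounded_p_unif_cont_const)

definition congruence_preserving :: "((nat \<Rightarrow> nat) \<Rightarrow> int) \<Rightarrow> bool" where
  "congruence_preserving f \<longleftrightarrow>
     (\<forall>N a b. (\<forall>l. int (p ^ N) dvd (int (b l) - int (a l))) \<longrightarrow> int (p ^ N) dvd (f a - f b))"

lemma congruence_preserving_linear: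
  "congruence_preserving (\<lambda>a. d + (\<Sum>l\<in>L. c l * int (a l)))"
  unfolding congruence_preserving_def
proof (intro allI impI)
  fix N :: nat and a b :: "nat \<Rightarrow> nat" assume d: "\<forall>l. int (p ^ N) dvd (int (b l) - int (a l))"
  have "int (p ^ N) dvd (\<Sum>l\<in>L. c l * (int (a l) - int (b l)))"
    using d by (intro dvd_sum) (auto simp: dvd_diff_commute)
  then show "int (p ^ N) dvd (d + (\<Sum>l\<in>L. c l * int (a l)) - (d + (\<Sum>l\<in>L. c l * int (b l))))"
    by (simp add: sum_subtractf right_diff_distrib)
qed

lemma bounded_p_unif_cont_powi:
  assumes Q: "absv (1 - Q) < 1" and f: "congruence_preserving f"
  shows "bounded_p_unif_cont (\<lambda>a. Q powi f a)"
proof (rule bounded_p_unif_contI[of _ 1])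
  fix a show "absv (Q powi f a) \<le> 1" using absv_powi_eq_1[OF absv_eq_1_if_close_1[OF Q]] by simp
next
  fix e :: real assume "e > 0"
  then obtain N where N: "\<forall>m. int (p ^ N) dvd m \<longrightarrow> absv (1 - Q powi m) < e"
    using powi_close_1_if_dvd[OF Q] by blast
  have "absv (Q powi f a - Q powi f b) < e"
    if "\<forall>l. int (p ^ N) dvd (int (b l) - int (a l))" for a b
    using that f powi_diff_small_if_dvd[OF Q N] unfolding congruence_preserving_def by simp
  then show "\<exists>N. \<forall>a b. (\<forall>l. int (p ^ N) dvd (int (b l) - int (a l))) \<longrightarrow> absv (Q powi f a - Q powi f b) < e"
    by blast
qed

lemma bounded_p_unif_cont_of_int:
  assumes f: "congruence_preserving f" shows "bounded_p_unif_cont (\<lambda>a. of_int (f a) :: 'a)"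
proof (rule bounded_p_unif_contI[of _ 1])
  fix a show "absv (of_int (f a) :: 'a) \<le> 1" by (rule absv_of_int_le_1)
next
  fix e :: real assume e: "e > 0"
  have "1 / real p < 1" using p_gt_1 by simp
  then obtain N where N: "(1 / real p) ^ N < e" using real_arch_pow_inv[OF e] by blast
  have "absv (of_int (f a) - of_int (f b) :: 'a) < e"
    if "\<forall>l. int (p ^ N) dvd (int (b l) - int (a l))" for a b
  proof -
    have "absv (of_int (f a - f b) :: 'a) \<le> (1 / real p) ^ N"
      using f that absv_of_int_le_if_dvd[of N "f a - f b"] unfolding congruence_preserving_def by simp
    then show ?thesis using N by simp
  qed
  then show "\<exists>N. \<forall>a b. (\<forall>l. int (p ^ N) dvd (int (b l) - int (a l))) \<longrightarrow> absv (of_int (f a) - of_int (f b) :: 'a) < e"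
    by blast
qed

lemma bounded_p_unif_cont_qnum_shift:
  assumes R: "absv (1 - R) < 1" and z: "z \<in> Zp absv" and g: "congruence_preserving g"
  shows "bounded_p_unif_cont (\<lambda>a. qnum absv R (z + of_int (g a)))"
proof (cases "R = 1")
  case True
  have "bounded_p_unif_cont (\<lambda>a. z + of_int (g a))"
    by (intro bounded_p_unif_cont_add bounded_p_unif_cont_const bounded_p_unif_cont_of_int[OF g])
  then show ?thesis using True by (simp add: qnum_def)
next
  case False
  have "qnum absv R (z + of_int (g a))
      = R powi g a * qnum absv R z + (1 + (- 1) * R powi g a) * inverse (1 - R)" for a
    using qnum_add[OF R z Zp_of_int, of "g a"] qpow_of_int[OF R] False
    by (simp add: qnum_def divide_inverse)
  moreover have "bounded_p_unif_cont
      (\<lambda>a. R powi g a * qnum absv R z + (1 + (- 1) * R powi g a) * inverse (1 - R))"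
    by (intro bounded_p_unif_cont_add bounded_p_unif_cont_mult bounded_p_unif_cont_const
        bounded_p_unif_cont_powi[OF R g])
  ultimately show ?thesis by simp
qed

lemma bounded_p_unif_cont_qpow_qnum_power:
  assumes "absv (1 - Q) < 1" "absv (1 - R) < 1" "z \<in> Zp absv"
    and "congruence_preserving f" "congruence_preserving g"
  shows "bounded_p_unif_cont (\<lambda>a. Q powi f a * qnum absv R (z + of_int (g a)) ^ m)"
  using assms
  by (intro bounded_p_unif_cont_mult bounded_p_unif_cont_powi bounded_p_unif_cont_power
      bounded_p_unif_cont_qnum_shift)

definition of_nat_vec :: "(nat \<Rightarrow> nat) \<Rightarrow> nat \<Rightarrow> 'a" where
  "of_nat_vec a = (\<lambda>l. of_nat (a l))"

lemma of_nat_vec_upd: "(of_nat_vec a)(j := of_nat n) = of_nat_vec (a(j := n))"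
  by (auto simp: of_nat_vec_def fun_eq_iff)

lemma p_unif_cont_if_bounded_p_unif_cont:
  assumes "bounded_p_unif_cont G" "\<And>n. H (of_nat n) = G (a(j := n))"
  shows "p_unif_cont H"
  unfolding p_unif_cont_def
proof (intro allI impI)
  fix e :: real assume "e > 0"
  then obtain N where N: "\<forall>a b. (\<forall>l. int (p ^ N) dvd (int (b l) - int (a l))) \<longrightarrow> absv (G a - G b) < e"
    using bounded_p_unif_contD[OF assms(1)] by blast
  have "absv (H (of_nat n1) - H (of_nat n2)) < e" if "int (p ^ N) dvd (int n2 - int n1)" for n1 n2
  proof -
    have "\<forall>l. int (p ^ N) dvd (int ((a(j := n2)) l) - int ((a(j := n1)) l))"
      using that by auto
    then show ?thesis using N assms(2) by simp
  qed
  then show "\<exists>N. \<forall>a b. int (p ^ N) dvd (int b - int a) \<longrightarrow> absv (H (of_nat a) - H (of_nat b)) < e"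
    by blast
qed

end

lemma sum_PiE_atLeastAtMost_Suc:
  "(\<Sum>j\<in>{1..Suc k} \<rightarrow>\<^sub>E {0..<(w::nat)}. f j) = (\<Sum>t<w. \<Sum>j\<in>{1..k} \<rightarrow>\<^sub>E {0..<w}. f (j(Suc k := t)))"
proof -
  have "{1..Suc k} = insert (Suc k) {1..k}" by auto
  then have "(\<Sum>j\<in>{1..Suc k} \<rightarrow>\<^sub>E {0..<w}. f j)
      = (\<Sum>j\<in>(\<lambda>(y, g). g(Suc k := y)) ` ({0..<w} \<times> ({1..k} \<rightarrow>\<^sub>E {0..<w})). f j)"
    by (simp add: PiE_insert_eq)
  also have "\<dots> = (\<Sum>x\<in>{0..<w} \<times> ({1..k} \<rightarrow>\<^sub>E {0..<w}). f ((\<lambda>(y, g). g(Suc k := y)) x))"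
    by (rule sum.reindex[OF inj_combinator[of "Suc k" "{1..k}" "\<lambda>_. {0..<w}"], unfolded comp_def]) auto
  also have "\<dots> = (\<Sum>(t, j)\<in>{0..<w} \<times> ({1..k} \<rightarrow>\<^sub>E {0..<w}). f (j(Suc k := t)))"
    by (simp add: split_def)
  also have "\<dots> = (\<Sum>t\<in>{0..<w}. \<Sum>j\<in>{1..k} \<rightarrow>\<^sub>E {0..<w}. f (j(Suc k := t)))"
    by (rule sum.cartesian_product[symmetric])
  also have "\<dots> = (\<Sum>t<w. \<Sum>j\<in>{1..k} \<rightarrow>\<^sub>E {0..<w}. f (j(Suc k := t)))"
    by (simp add: atLeast0LessThan)
  finally show ?thesis .
qed

context odd_Cp_field
begin

lemma fmint_cong_of_nat_vec:
  assumes "\<And>b. F (of_nat_vec b) = G (of_nat_vec b)"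
  shows "fmint p absv k F (of_nat_vec a) = fmint p absv k G (of_nat_vec a)"
proof (induction k arbitrary: a)
  case (Suc k)
  show ?case by simp (rule fint_cong, simp only: of_nat_vec_upd Suc.IH)
qed (simp add: assms)

lemma fmint_cong:
  assumes "\<And>zs. F1 (\<lambda>l. if 1 \<le> l \<and> l \<le> k then zs l else ys1 l) = F2 (\<lambda>l. if 1 \<le> l \<and> l \<le> k then zs l else ys2 l)"
  shows "fmint p absv k F1 ys1 = fmint p absv k F2 ys2"
  using assms
proof (induction k arbitrary: ys1 ys2)
  case 0
  have "(\<lambda>l. if 1 \<le> l \<and> l \<le> (0::nat) then zs l else ys l) = ys" for zs ys :: "nat \<Rightarrow> 'a"
    by (auto simp: fun_eq_iff)
  then show ?case using 0[of ys1] by simp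
next
  case (Suc k)
  have "fmint p absv k F1 (ys1(Suc k := y)) = fmint p absv k F2 (ys2(Suc k := y))" for y
  proof (rule Suc.IH)
    fix zs
    have upd: "(\<lambda>l. if 1 \<le> l \<and> l \<le> k then zs l else (ys(Suc k := y)) l)
        = (\<lambda>l. if 1 \<le> l \<and> l \<le> Suc k then (zs(Suc k := y)) l else ys l)" for ys :: "nat \<Rightarrow> 'a"
      by (auto simp: fun_eq_iff)
    show "F1 (\<lambda>l. if 1 \<le> l \<and> l \<le> k then zs l else (ys1(Suc k := y)) l) =
          F2 (\<lambda>l. if 1 \<le> l \<and> l \<le> k then zs l else (ys2(Suc k := y)) l)"
      unfolding upd by (rule Suc.prems)
  qed
  then show ?case by simp
qed

lemma bounded_p_unif_cont_fint:
  assumes G: "bounded_p_unif_cont G" and H: "\<And>a n. H a (of_nat n) = G (a(j := n))"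
  shows "bounded_p_unif_cont (\<lambda>a. fint p absv (H a))"
proof -
  have conv: "conv (fsum (H a)) (fint p absv (H a))" for a
    using p_unif_cont_if_bounded_p_unif_cont[OF G H] by (rule fsum_conv_fint)
  obtain B where B: "B > 0" "\<forall>a. absv (G a) \<le> B" using bounded_p_unif_cont_bound[OF G] by blast
  have "absv (fint p absv (H a)) \<le> B" for a
  proof (rule conv_abs_absv_le[OF conv])
    fix N show "absv (fsum (H a) N) \<le> B"
      unfolding fsum_def using B by (intro absv_sum_le) (auto simp: H)
  qed
  moreover have "\<exists>N. \<forall>a b. (\<forall>l. int (p ^ N) dvd (int (b l) - int (a l))) \<longrightarrow>
      absv (fint p absv (H a) - fint p absv (H b)) < e" if "e > 0" for e
  proof -
    obtain N where N: "\<forall>a b. (\<forall>l. int (p ^ N) dvd (int (b l) - int (a l))) \<longrightarrow> absv (G a - G b) < e / 2"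
      using bounded_p_unif_contD[OF G] \<open>e > 0\<close> by (meson half_gt_zero)
    have "absv (fint p absv (H a) - fint p absv (H b)) \<le> e / 2"
      if d: "\<forall>l. int (p ^ N) dvd (int (b l) - int (a l))" for a b
    proof (rule conv_abs_absv_le[OF conv_abs_diff[OF conv conv]])
      fix M
      have "\<forall>l. int (p ^ N) dvd (int ((b(j := y)) l) - int ((a(j := y)) l))" for y
        using d by auto
      then have "absv ((H a (of_nat y) - H b (of_nat y)) * (-1) ^ y) \<le> e / 2" for y
        using N by (simp add: H less_imp_le)
      then have "absv (\<Sum>y<p^M. (H a (of_nat y) - H b (of_nat y)) * (-1) ^ y) \<le> e / 2"
        using \<open>e > 0\<close> by (intro absv_sum_le) auto
      then show "absv (fsum (H a) M - fsum (H b) M) \<le> e / 2"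
        by (simp add: fsum_def sum_subtractf left_diff_distrib)
    qed
    moreover have "e / 2 < e" using \<open>e > 0\<close> by simp
    ultimately show ?thesis by (meson le_less_trans)
  qed
  ultimately show ?thesis by (intro bounded_p_unif_contI) auto
qed

lemma bounded_p_unif_cont_fmint:
  assumes "bounded_p_unif_cont (\<lambda>a. F (of_nat_vec a))"
  shows "bounded_p_unif_cont (\<lambda>a. fmint p absv k F (of_nat_vec a))"
proof (induction k)
  case (Suc k)
  have "fmint p absv k F ((of_nat_vec a)(Suc k := of_nat n)) = fmint p absv k F (of_nat_vec (a(Suc k := n)))"
    for a n by (simp only: of_nat_vec_upd)
  from bounded_p_unif_cont_fint[OF Suc this] show ?case by (simp only: fmint.simps)
qed (simp add: assms)

lemma fmint_sum:
  assumes "finite I" "\<And>i. i \<in> I \<Longrightarrow> bounded_p_unif_cont (\<lambda>a. F i (of_nat_vec a))"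
  shows "fmint p absv k (\<lambda>ys. \<Sum>i\<in>I. c i * F i ys) (of_nat_vec a)
       = (\<Sum>i\<in>I. c i * fmint p absv k (F i) (of_nat_vec a))"
proof (induction k arbitrary: a)
  case (Suc k)
  have "fmint p absv (Suc k) (\<lambda>ys. \<Sum>i\<in>I. c i * F i ys) (of_nat_vec a)
      = fint p absv (\<lambda>y. \<Sum>i\<in>I. c i * fmint p absv k (F i) ((of_nat_vec a)(Suc k := y)))"
    by simp (rule fint_cong, simp only: of_nat_vec_upd Suc.IH)
  also have "\<dots> = (\<Sum>i\<in>I. c i * fint p absv (\<lambda>y. fmint p absv k (F i) ((of_nat_vec a)(Suc k := y))))"
  proof (rule fint_sum[OF assms(1)])
    fix i assume "i \<in> I"
    then have "bounded_p_unif_cont (\<lambda>a. fmint p absv k (F i) (of_nat_vec a))"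
      using bounded_p_unif_cont_fmint assms(2) by blast
    then show "p_unif_cont (\<lambda>y. fmint p absv k (F i) ((of_nat_vec a)(Suc k := y)))"
      by (rule p_unif_cont_if_bounded_p_unif_cont) (simp add: of_nat_vec_upd)
  qed
  finally show ?case by simp
qed simp

lemma fmint_cmult:
  assumes "bounded_p_unif_cont (\<lambda>a. F (of_nat_vec a))"
  shows "fmint p absv k (\<lambda>ys. c * F ys) (of_nat_vec a) = c * fmint p absv k F (of_nat_vec a)"
  using fmint_sum[of "{0::nat}" "\<lambda>_. F" k "\<lambda>_. c" a] assms by simp

definition affine_subst :: "nat \<Rightarrow> nat \<Rightarrow> (nat \<Rightarrow> nat) \<Rightarrow> (nat \<Rightarrow> 'a) \<Rightarrow> nat \<Rightarrow> 'a" where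
  "affine_subst k w j ys = (\<lambda>l. if 1 \<le> l \<and> l \<le> k then of_nat (j l) + of_nat w * ys l else ys l)"

lemma bounded_p_unif_cont_affine_subst:
  assumes "bounded_p_unif_cont (\<lambda>a. F (of_nat_vec a))"
  shows "bounded_p_unif_cont (\<lambda>a. F (affine_subst k w j (of_nat_vec a)))"
proof -
  define \<sigma> where "\<sigma> a = (\<lambda>l. if 1 \<le> l \<and> l \<le> k then j l + w * a l else a l)" for a
  have \<sigma>: "affine_subst k w j (of_nat_vec a) = of_nat_vec (\<sigma> a)" for a
    by (simp add: of_nat_vec_def affine_subst_def \<sigma>_def fun_eq_iff)
  have "int (p ^ N) dvd (int (\<sigma> b l) - int (\<sigma> a l))"
    if "int (p ^ N) dvd (int (b l) - int (a l))" for N a b l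
  proof -
    have "int (\<sigma> b l) - int (\<sigma> a l) = (if 1 \<le> l \<and> l \<le> k then int w else 1) * (int (b l) - int (a l))"
      by (simp add: \<sigma>_def algebra_simps)
    then show ?thesis using that by simp
  qed
  moreover obtain B where "\<forall>a. absv (F (of_nat_vec a)) \<le> B"
    using assms unfolding bounded_p_unif_cont_def by blast
  ultimately show ?thesis
    using assms unfolding bounded_p_unif_cont_def \<sigma> by meson
qed

lemma fmint_affine_subst_Suc:
  "fmint p absv k (\<lambda>ys. F (affine_subst k w j ys)) (ys(Suc k := of_nat t + of_nat w * y))
   = fmint p absv k (\<lambda>ys. F (affine_subst (Suc k) w (j(Suc k := t)) ys)) (ys(Suc k := y))"
  by (rule fmint_cong, rule arg_cong[where f = F]) (auto simp: affine_subst_def fun_eq_iff)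

lemma fmint_odd_dilation:
  assumes F: "bounded_p_unif_cont (\<lambda>a. F (of_nat_vec a))" and "odd w"
  shows "fmint p absv k F (of_nat_vec a)
       = (\<Sum>j\<in>{1..k} \<rightarrow>\<^sub>E {0..<w}. (-1) ^ (\<Sum>l=1..k. j l)
            * fmint p absv k (\<lambda>ys. F (affine_subst k w j ys)) (of_nat_vec a))"
proof (induction k arbitrary: a)
  case 0
  have "affine_subst 0 w j ys = ys" for j ys by (simp add: affine_subst_def fun_eq_iff)
  then show ?case by simp
next
  case (Suc k)
  let ?P = "{1..k} \<rightarrow>\<^sub>E {0..<w}"
  define g where "g j y = fmint p absv k (\<lambda>ys. F (affine_subst k w j ys)) ((of_nat_vec a)(Suc k := y))" for j y
  have g: "p_unif_cont (g j)" for j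
    using bounded_p_unif_cont_fmint[OF bounded_p_unif_cont_affine_subst[OF F]] unfolding g_def
    by (rule p_unif_cont_if_bounded_p_unif_cont) (simp add: of_nat_vec_upd)
  have "fmint p absv (Suc k) F (of_nat_vec a) = fint p absv (\<lambda>y. fmint p absv k F ((of_nat_vec a)(Suc k := y)))"
    by simp
  also have "\<dots> = fint p absv (\<lambda>y. \<Sum>j\<in>?P. (-1) ^ (\<Sum>l=1..k. j l) * g j y)"
    by (rule fint_cong) (simp only: of_nat_vec_upd Suc.IH g_def)
  also have "\<dots> = (\<Sum>j\<in>?P. (-1) ^ (\<Sum>l=1..k. j l) * fint p absv (g j))"
    by (rule fint_sum) (auto intro: g finite_PiE)
  also have "\<dots> = (\<Sum>j\<in>?P. \<Sum>t<w. (-1) ^ (\<Sum>l=1..Suc k. (j(Suc k := t)) l) *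
        fmint p absv (Suc k) (\<lambda>ys. F (affine_subst (Suc k) w (j(Suc k := t)) ys)) (of_nat_vec a))"
  proof (intro sum.cong refl)
    fix j assume "j \<in> ?P"
    have "(\<Sum>l=1..Suc k. (j(Suc k := t)) l) = (\<Sum>l=1..k. j l) + t" for t
      by (simp add: sum.atLeast_Suc_atMost_Suc_shift)
    moreover have "fint p absv (\<lambda>y. g j (of_nat t + of_nat w * y))
        = fmint p absv (Suc k) (\<lambda>ys. F (affine_subst (Suc k) w (j(Suc k := t)) ys)) (of_nat_vec a)" for t
      by (simp add: g_def fmint_affine_subst_Suc)
    ultimately show "(-1) ^ (\<Sum>l=1..k. j l) * fint p absv (g j)
      = (\<Sum>t<w. (-1) ^ (\<Sum>l=1..Suc k. (j(Suc k := t)) l) *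
          fmint p absv (Suc k) (\<lambda>ys. F (affine_subst (Suc k) w (j(Suc k := t)) ys)) (of_nat_vec a))"
      unfolding fint_odd_dilation[OF g \<open>odd w\<close>] by (simp add: sum_distrib_left power_add mult_ac)
  qed
  also have "\<dots> = (\<Sum>j\<in>{1..Suc k} \<rightarrow>\<^sub>E {0..<w}. (-1) ^ (\<Sum>l=1..Suc k. j l) *
        fmint p absv (Suc k) (\<lambda>ys. F (affine_subst (Suc k) w j ys)) (of_nat_vec a))"
    by (subst sum_PiE_atLeastAtMost_Suc) (rule sum.swap)
  finally show ?case .
qed

end

section \<open>Symmetry of the q-Euler expansions\<close>

locale q_euler_symmetry = odd_Cp_field p absv for p and absv :: "'a::field_char_0 \<Rightarrow> real" +
  fixes q x :: 'a and h :: int and r n :: nat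
  assumes q: "absv (1 - q) < 1" and x: "x \<in> Zp absv"
begin

definition index_sum :: "(nat \<Rightarrow> nat) \<Rightarrow> nat" where
  "index_sum j = (\<Sum>l=1..r. j l)"

definition index_weight :: "(nat \<Rightarrow> nat) \<Rightarrow> int" where
  "index_weight j = (\<Sum>l=1..r. (h - int l) * int (j l))"

definition euler_integrand :: "'a \<Rightarrow> 'a \<Rightarrow> nat \<Rightarrow> (nat \<Rightarrow> 'a) \<Rightarrow> 'a" where
  "euler_integrand Q z m ys =
     qpow absv Q (\<Sum>l=1..r. of_int (h - int l) * ys l) * qnum absv Q (z + (\<Sum>l=1..r. ys l)) ^ m"

definition dilated_integrand :: "nat \<Rightarrow> nat \<Rightarrow> nat \<Rightarrow> (nat \<Rightarrow> 'a) \<Rightarrow> 'a" where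
  "dilated_integrand u v J ys = qpow absv (q ^ u) (\<Sum>l=1..r. of_int (h - int l) * ys l)
      * qnum absv q (of_nat u * (of_nat v * x + (\<Sum>l=1..r. ys l)) + of_nat v * of_nat J) ^ n"

definition joint_integrand :: "nat \<Rightarrow> nat \<Rightarrow> (nat \<Rightarrow> 'a) \<Rightarrow> 'a" where
  "joint_integrand W m ys = qpow absv (q ^ W) (\<Sum>l=1..r. of_int (h - int l) * ys l)
      * qnum absv q (of_nat W * x + of_nat m + of_nat W * (\<Sum>l=1..r. ys l)) ^ n"

lemma sum_of_nat_vec: "(\<Sum>l=1..r. of_nat_vec a l) = (of_nat (index_sum a) :: 'a)"
  by (simp add: of_nat_vec_def index_sum_def)

lemma weighted_sum_of_nat_vec:
  "(\<Sum>l=1..r. of_int (h - int l) * of_nat_vec a l) = (of_int (index_weight a) :: 'a)"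
  by (simp add: of_nat_vec_def index_weight_def)

lemma absv_1_minus_q_power: "absv (1 - q ^ u) < 1"
  by (rule absv_1_minus_power_less_1[OF q])

lemma congruence_preserving_index_weight: "congruence_preserving index_weight"
  using congruence_preserving_linear[of 0 "\<lambda>l. h - int l" "{1..r}"]
  by (simp add: index_weight_def[abs_def])

lemma congruence_preserving_index_sum: "congruence_preserving (\<lambda>a. d + int c * int (index_sum a))"
  using congruence_preserving_linear[of d "\<lambda>l. int c" "{1..r}"]
  by (simp add: index_sum_def sum_distrib_left)

lemma bounded_p_unif_cont_euler_integrand:
  assumes Q: "absv (1 - Q) < 1" and z: "z \<in> Zp absv"
  shows "bounded_p_unif_cont (\<lambda>a. euler_integrand Q z m (of_nat_vec a))"
proof -
  have eq: "euler_integrand Q z m (of_nat_vec a)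
      = Q powi index_weight a * qnum absv Q (z + of_int (0 + int 1 * int (index_sum a))) ^ m" for a
    by (simp only: euler_integrand_def sum_of_nat_vec weighted_sum_of_nat_vec qpow_of_int[OF Q]) simp
  show ?thesis unfolding eq
    by (rule bounded_p_unif_cont_qpow_qnum_power[OF Q Q z congruence_preserving_index_weight
        congruence_preserving_index_sum])
qed

lemma bounded_p_unif_cont_dilated_integrand:
  "bounded_p_unif_cont (\<lambda>a. dilated_integrand u v J (of_nat_vec a))"
proof -
  have eq: "dilated_integrand u v J (of_nat_vec a) = (q ^ u) powi index_weight a
      * qnum absv q (of_nat u * (of_nat v * x) + of_int (int v * int J + int u * int (index_sum a))) ^ n" for a
    by (simp only: dilated_integrand_def sum_of_nat_vec weighted_sum_of_nat_vec
        qpow_of_int[OF absv_1_minus_q_power]) (simp add: algebra_simps)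
  show ?thesis unfolding eq
    by (rule bounded_p_unif_cont_qpow_qnum_power[OF absv_1_minus_q_power q
        Zp_of_nat_mult[OF Zp_of_nat_mult[OF x]] congruence_preserving_index_weight
        congruence_preserving_index_sum])
qed

lemma bounded_p_unif_cont_joint_integrand:
  "bounded_p_unif_cont (\<lambda>a. joint_integrand W m (of_nat_vec a))"
proof -
  have eq: "joint_integrand W m (of_nat_vec a) = (q ^ W) powi index_weight a
      * qnum absv q (of_nat W * x + of_int (int m + int W * int (index_sum a))) ^ n" for a
    by (simp only: joint_integrand_def sum_of_nat_vec weighted_sum_of_nat_vec
        qpow_of_int[OF absv_1_minus_q_power]) (simp add: algebra_simps)
  show ?thesis unfolding eq
    by (rule bounded_p_unif_cont_qpow_qnum_power[OF absv_1_minus_q_power q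
        Zp_of_nat_mult[OF x] congruence_preserving_index_weight
        congruence_preserving_index_sum])
qed


definition expansion_coeff :: "nat \<Rightarrow> nat \<Rightarrow> (nat \<Rightarrow> nat) \<Rightarrow> nat \<Rightarrow> 'a" where
  "expansion_coeff u v j i = of_nat (n choose i) * qnum absv q (of_nat v) ^ i * qnum absv q (of_nat u) ^ (n - i)
     * ((-1) ^ index_sum j * (q ^ v) powi (\<Sum>l=1..r. (int n + h - int l - int i) * int (j l))
        * qnum absv (q ^ v) (of_nat (index_sum j)) ^ i)"

lemma powi_index_weight_mult_power:
  fixes Q :: 'a
  assumes "Q \<noteq> 0" "i \<le> n"
  shows "Q powi index_weight j * (Q ^ index_sum j) ^ (n - i)
       = Q powi (\<Sum>l=1..r. (int n + h - int l - int i) * int (j l))"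
proof -
  have "(\<Sum>l=1..r. (int n + h - int l - int i) * int (j l))
      = (\<Sum>l=1..r. (h - int l) * int (j l) + (int n - int i) * int (j l))"
    by (rule sum.cong) (auto simp: algebra_simps)
  also have "\<dots> = index_weight j + int (index_sum j) * int (n - i)"
    using assms(2) by (simp add: sum.distrib index_weight_def index_sum_def sum_distrib_left of_nat_diff mult.commute)
  finally show ?thesis
    using assms(1) by (simp add: power_int_add power_int_mult flip: power_mult power_int_of_nat)
qed

lemma dilated_integrand_binomial_expansion:
  "(-1) ^ index_sum j * (q ^ v) powi index_weight j * dilated_integrand u v (index_sum j) (of_nat_vec a)
   = (\<Sum>i=0..n. expansion_coeff u v j i * euler_integrand (q ^ u) (of_nat v * x) (n - i) (of_nat_vec a))"
proof -
  define J where "J = index_sum j"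
  define A where "A = of_nat v * x + (\<Sum>l=1..r. of_nat_vec a l)"
  have A: "A \<in> Zp absv" unfolding A_def sum_of_nat_vec by (intro Zp_add Zp_of_nat_mult x Zp_of_nat)
  define E where "E = qpow absv (q ^ u) (\<Sum>l=1..r. of_int (h - int l) * of_nat_vec a l)"
  define \<alpha> where "\<alpha> = qnum absv q (of_nat v) * qnum absv (q ^ v) (of_nat J)"
  define \<beta> where "\<beta> = (q ^ v) ^ J * (qnum absv q (of_nat u) * qnum absv (q ^ u) A)"
  have "(-1) ^ J * (q ^ v) powi index_weight j * dilated_integrand u v J (of_nat_vec a)
      = (-1) ^ J * (q ^ v) powi index_weight j * (E * (\<alpha> + \<beta>) ^ n)"
    unfolding dilated_integrand_def E_def A_def[symmetric] qnum_dilation_shift[OF q A] \<alpha>_def \<beta>_def ..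
  also have "\<dots> = (\<Sum>i=0..n. (-1) ^ J * (q ^ v) powi index_weight j * (E * (of_nat (n choose i) * \<alpha> ^ i * \<beta> ^ (n - i))))"
    by (simp add: binomial_ring atLeast0AtMost sum_distrib_left)
  also have "\<dots> = (\<Sum>i=0..n. expansion_coeff u v j i * euler_integrand (q ^ u) (of_nat v * x) (n - i) (of_nat_vec a))"
  proof (rule sum.cong[OF refl])
    fix i assume "i \<in> {0..n}"
    then have e: "(q ^ v) powi index_weight j * ((q ^ v) ^ J) ^ (n - i)
        = (q ^ v) powi (\<Sum>l=1..r. (int n + h - int l - int i) * int (j l))"
      unfolding J_def using nonzero_if_close_1[OF absv_1_minus_q_power]
      by (intro powi_index_weight_mult_power) auto
    have E: "euler_integrand (q ^ u) (of_nat v * x) (n - i) (of_nat_vec a) = E * qnum absv (q ^ u) A ^ (n - i)"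
      by (simp add: euler_integrand_def E_def A_def)
    have rearrange: "P * Z ^ m = P' \<Longrightarrow>
        s * P * (F * (C * (V * K) ^ i * (Z * (U * M)) ^ m)) = C * V ^ i * U ^ m * (s * P' * K ^ i) * (F * M ^ m)"
      for s P P' F C V K Z U M :: 'a and m
      by (auto simp only: power_mult_distrib mult_ac)
    show "(-1) ^ J * (q ^ v) powi index_weight j * (E * (of_nat (n choose i) * \<alpha> ^ i * \<beta> ^ (n - i)))
        = expansion_coeff u v j i * euler_integrand (q ^ u) (of_nat v * x) (n - i) (of_nat_vec a)"
      unfolding expansion_coeff_def \<alpha>_def \<beta>_def J_def[symmetric] E by (rule rearrange[OF e])
  qed
  finally show ?thesis unfolding J_def .
qed


definition single_sum :: "nat \<Rightarrow> nat \<Rightarrow> 'a" where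
  "single_sum u v = (\<Sum>j\<in>{1..r} \<rightarrow>\<^sub>E {0..<u}. (-1) ^ index_sum j * (q ^ v) powi index_weight j
      * fmint p absv r (dilated_integrand u v (index_sum j)) (of_nat_vec (\<lambda>_. 0)))"

definition double_sum :: "nat \<Rightarrow> nat \<Rightarrow> 'a" where
  "double_sum u v = (\<Sum>j\<in>{1..r} \<rightarrow>\<^sub>E {0..<u}. \<Sum>k\<in>{1..r} \<rightarrow>\<^sub>E {0..<v}.
      (-1) ^ (index_sum j + index_sum k) * ((q ^ v) powi index_weight j * (q ^ u) powi index_weight k)
      * fmint p absv r (joint_integrand (u * v) (v * index_sum j + u * index_sum k)) (of_nat_vec (\<lambda>_. 0)))"

definition euler_T_sum :: "nat \<Rightarrow> nat \<Rightarrow> 'a" where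
  "euler_T_sum u v = (\<Sum>i=0..n. of_nat (n choose i) * qnum absv q (of_nat v) ^ i
      * qnum absv q (of_nat u) ^ (n - i)
      * Eqhr p absv (n - i) (q ^ u) h r (of_nat v * x)
      * Tqhr absv n i (q ^ v) h r u)"

lemma Eqhr_eq_fmint: "Eqhr p absv m Q h r z = fmint p absv r (euler_integrand Q z m) (of_nat_vec (\<lambda>_. 0))"
proof -
  have "of_nat_vec (\<lambda>_. 0) = (\<lambda>_. 0 :: 'a)" by (simp add: of_nat_vec_def)
  then show ?thesis by (simp add: Eqhr_def euler_integrand_def[abs_def])
qed

lemma single_sum_eq_euler_T_sum: "single_sum u v = euler_T_sum u v"
proof -
  let ?P = "{1..r} \<rightarrow>\<^sub>E {0..<u}" and ?E = "\<lambda>i. fmint p absv r (euler_integrand (q ^ u) (of_nat v * x) (n - i)) (of_nat_vec (\<lambda>_. 0))"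
  have "single_sum u v = (\<Sum>j\<in>?P. fmint p absv r (\<lambda>ys. (-1) ^ index_sum j * (q ^ v) powi index_weight j
      * dilated_integrand u v (index_sum j) ys) (of_nat_vec (\<lambda>_. 0)))"
    unfolding single_sum_def by (simp only: fmint_cmult[OF bounded_p_unif_cont_dilated_integrand])
  also have "\<dots> = (\<Sum>j\<in>?P. fmint p absv r (\<lambda>ys. \<Sum>i\<in>{0..n}. expansion_coeff u v j i
      * euler_integrand (q ^ u) (of_nat v * x) (n - i) ys) (of_nat_vec (\<lambda>_. 0)))"
    by (intro sum.cong refl fmint_cong_of_nat_vec) (rule dilated_integrand_binomial_expansion)
  also have "\<dots> = (\<Sum>j\<in>?P. \<Sum>i\<in>{0..n}. expansion_coeff u v j i * ?E i)"
    using bounded_p_unif_cont_euler_integrand[OF absv_1_minus_q_power Zp_of_nat_mult[OF x]]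
    by (intro sum.cong refl fmint_sum) auto
  also have "\<dots> = (\<Sum>i\<in>{0..n}. \<Sum>j\<in>?P. expansion_coeff u v j i * ?E i)"
    by (rule sum.swap)
  also have "\<dots> = euler_T_sum u v"
    unfolding euler_T_sum_def Eqhr_eq_fmint Tqhr_def expansion_coeff_def index_sum_def
    by (simp add: sum_distrib_left sum_distrib_right mult_ac)
  finally show ?thesis .
qed

lemma dilated_integrand_affine_subst:
  "dilated_integrand u v J (affine_subst r v k (of_nat_vec a))
   = (q ^ u) powi index_weight k * joint_integrand (u * v) (v * J + u * index_sum k) (of_nat_vec a)"
proof -
  have "(\<Sum>l=1..r. of_int (h - int l) * affine_subst r v k (of_nat_vec a) l)
      = (\<Sum>l=1..r. of_int (h - int l) * (of_nat (k l) + of_nat v * of_nat (a l)) :: 'a)"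
    by (rule sum.cong) (auto simp: affine_subst_def of_nat_vec_def)
  also have "\<dots> = of_int (\<Sum>l=1..r. (h - int l) * int (k l) + int v * ((h - int l) * int (a l)))"
    by (simp add: algebra_simps)
  also have "\<dots> = of_int (index_weight k + int v * index_weight a)"
    by (simp add: index_weight_def sum.distrib sum_distrib_left)
  finally have weight: "(\<Sum>l=1..r. of_int (h - int l) * affine_subst r v k (of_nat_vec a) l)
      = (of_int (index_weight k + int v * index_weight a) :: 'a)" .
  have "(\<Sum>l=1..r. affine_subst r v k (of_nat_vec a) l) = (\<Sum>l=1..r. of_nat (k l) + of_nat v * of_nat (a l) :: 'a)"
    by (rule sum.cong) (auto simp: affine_subst_def of_nat_vec_def)
  also have "\<dots> = of_nat (index_sum k + v * index_sum a)"
    by (simp add: index_sum_def sum.distrib sum_distrib_left)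
  finally have sum: "(\<Sum>l=1..r. affine_subst r v k (of_nat_vec a) l) = (of_nat (index_sum k + v * index_sum a) :: 'a)" .
  have powi_weight: "(q ^ u) powi (index_weight k + int v * index_weight a)
      = (q ^ u) powi index_weight k * (q ^ (u * v)) powi index_weight a"
    using nonzero_if_close_1[OF absv_1_minus_q_power, of u]
    by (simp add: power_int_add power_int_mult power_mult)
  have arg: "of_nat u * (of_nat v * x + of_nat (index_sum k + v * index_sum a)) + of_nat v * of_nat J
      = of_nat (u * v) * x + of_nat (v * J + u * index_sum k) + of_nat (u * v) * (of_nat (index_sum a) :: 'a)"
    by (simp add: algebra_simps)
  show ?thesis
    unfolding dilated_integrand_def joint_integrand_def weight sum sum_of_nat_vec weighted_sum_of_nat_vec
      qpow_of_int[OF absv_1_minus_q_power] powi_weight arg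
    by (simp add: mult_ac)
qed

lemma fmint_dilated_integrand:
  assumes "odd v"
  shows "fmint p absv r (dilated_integrand u v J) (of_nat_vec (\<lambda>_. 0))
       = (\<Sum>k\<in>{1..r} \<rightarrow>\<^sub>E {0..<v}. (-1) ^ index_sum k * ((q ^ u) powi index_weight k
            * fmint p absv r (joint_integrand (u * v) (v * J + u * index_sum k)) (of_nat_vec (\<lambda>_. 0))))"
proof -
  have "fmint p absv r (\<lambda>ys. dilated_integrand u v J (affine_subst r v k ys)) (of_nat_vec (\<lambda>_. 0))
      = (q ^ u) powi index_weight k * fmint p absv r (joint_integrand (u * v) (v * J + u * index_sum k)) (of_nat_vec (\<lambda>_. 0))"
    for k
  proof -
    have "fmint p absv r (\<lambda>ys. dilated_integrand u v J (affine_subst r v k ys)) (of_nat_vec (\<lambda>_. 0))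
        = fmint p absv r (\<lambda>ys. (q ^ u) powi index_weight k * joint_integrand (u * v) (v * J + u * index_sum k) ys)
            (of_nat_vec (\<lambda>_. 0))"
      by (rule fmint_cong_of_nat_vec) (rule dilated_integrand_affine_subst)
    then show ?thesis by (simp only: fmint_cmult[OF bounded_p_unif_cont_joint_integrand])
  qed
  then show ?thesis
    using fmint_odd_dilation[OF bounded_p_unif_cont_dilated_integrand assms, where k=r and a="\<lambda>_. 0"]
    by (simp add: index_sum_def)
qed

lemma single_sum_eq_double_sum: "odd v \<Longrightarrow> single_sum u v = double_sum u v"
  unfolding single_sum_def double_sum_def fmint_dilated_integrand
  by (simp add: sum_distrib_left power_add mult_ac)

lemma double_sum_commute: "double_sum u v = double_sum v u"
  unfolding double_sum_def by (subst sum.swap) (simp add: ac_simps)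

lemma euler_T_sum_commute: "odd w1 \<Longrightarrow> odd w2 \<Longrightarrow> euler_T_sum w1 w2 = euler_T_sum w2 w1"
  by (metis single_sum_eq_euler_T_sum single_sum_eq_double_sum double_sum_commute)

end

theorem theorem4:
  fixes p :: nat and absv :: "'a::field_char_0 \<Rightarrow> real" and q x :: 'a
    and h :: int and r n w1 w2 :: nat
  assumes "prime p" and "odd p"
    and "is_Cp p absv"
    and "absv (1 - q) < 1"
    and "r \<ge> 1"
    and "odd w1" and "odd w2"
    and "x \<in> Zp absv"
  shows "(\<Sum>i=0..n. of_nat (n choose i) * qnum absv q (of_nat w2) ^ i
            * qnum absv q (of_nat w1) ^ (n - i)
            * Eqhr p absv (n - i) (q ^ w1) h r (of_nat w2 * x)
            * Tqhr absv n i (q ^ w2) h r w1)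
       = (\<Sum>i=0..n. of_nat (n choose i) * qnum absv q (of_nat w1) ^ i
            * qnum absv q (of_nat w2) ^ (n - i)
            * Eqhr p absv (n - i) (q ^ w2) h r (of_nat w1 * x)
            * Tqhr absv n i (q ^ w1) h r w2)"
proof -
  interpret q_euler_symmetry p absv q x h r n
    by unfold_locales (use assms in auto)
  show ?thesis using euler_T_sum_commute[OF \<open>odd w1\<close> \<open>odd w2\<close>] unfolding euler_T_sum_def .
qed

end
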